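(* Let $\Gamma$ be a rationally metrised graph and $\mu\in\mathcal M^0(\Gamma)$. For any fixed rational vertex $b$, the function $f(x)=\langle x-b,\mu\rangle$ on rational vertices $x$ is piecewise polynomial with log poles on the half-edges, and $\Delta(f)=\mu$.
   Context: Rationally metrised graph: finite sets of vertices $V$, oriented edges $E$, half-edges $D$, source map $s$, fixed-point-free involution $e\mapsto e^{-1}$ on $E$, $t(e)=s(e^{-1})$, connected, lengths $\ell(e)=\ell(e^{-1})\in\mathbb Q_{>0}$; $E^+$ = unoriented edges. Rational vertices are points at rational distance along edges or half-edges; all constructions are compatible with subdividing edges at rational points, so rational vertices may be treated as vertices (and a vertex $x$ as the delta measure at $x$). A measure (piecewise polynomial with log poles on $D$) is a formal sum $\mu=\sum_{e\in E}g_e(s_e)|ds_e|+\sum_{v\in V}\lambda_v v+\sum_{e\in D}\lambda_e e$ with $g_e\in\mathbb Q[s_e]$, $g_{e^{-1}}(s)=g_e(\ell(e)-s)$, $\lambda_v,\lambda_e\in\mathbb Q$; $\mathcal M^0(\Gamma)$ consists of those with $\sum_{e\in E^+}\int_0^{\ell(e)}g_e+\sum_v\lambda_v+\sum_{e\in D}\lambda_e=0$. $\Omega_{\log}(\Gamma)$ is the space of functions $f$ on rational vertices whose restriction $f_e$ to each edge is a polynomial in arc length and to each half-edge an affine function. The Laplacian $\Delta\colon\Omega_{\log}\to\mathcal M(\Gamma)$ is $\Delta f=-\sum_{e\in E}f_e''|ds_e|-\sum_v\left(\sum_{s(e)=v}f_e'(0)\right)v+\sum_{e\in D}f'_e\,e$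 (sum over edges and half-edges with source $v$). $\Delta$ has kernel the constants and image $\mathcal M^0(\Gamma)$. Integration: $\int f\,d\mu=\sum_{e\in E^+}\int_0^{\ell(e)}f_eg_e\,ds_e+\sum_v\lambda_vf(v)+\sum_{e\in D}\lambda_ef(s(e))$. Height pairing on $\mathcal M^0$: $\langle\mu,\nu\rangle=\int\Delta^{-1}(\mu)\,d\nu$ for any preimage $\Delta^{-1}(\mu)$ (independent of choice; symmetric). *)

theory Defs
  imports Main "HOL-Computational_Algebra.Polynomial"
begin

text \<open>Oriented edges and half-edges live in a common type 'e; edges are the set
  edges, half-edges the set hedges.  inv is the involution e to e^{-1},
  len the length of an edge.\<close>

record ('v, 'e) rmg =
  verts  :: "'v set"
  edges  :: "'e set"
  hedges :: "'e set"
  src    :: "'e \<Rightarrow> 'v"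
  inv    :: "'e \<Rightarrow> 'e"
  len    :: "'e \<Rightarrow> rat"

definition tgt :: "('v, 'e) rmg \<Rightarrow> 'e \<Rightarrow> 'v" where
  "tgt G e = src G (inv G e)"

definition rm_graph :: "('v, 'e) rmg \<Rightarrow> bool" where
  "rm_graph G \<longleftrightarrow>
     finite (verts G) \<and> finite (edges G) \<and> finite (hedges G) \<and>
     edges G \<inter> hedges G = {} \<and>
     (\<forall>e \<in> edges G \<union> hedges G. src G e \<in> verts G) \<and>
     (\<forall>e \<in> edges G. inv G e \<in> edges G \<and> inv G e \<noteq> e \<and> inv G (inv G e) = e) \<and>
     (\<forall>e \<in> edges G. len G e > 0 \<and> len G (inv G e) = len G e) \<and>
     (\<forall>u \<in> verts G. \<forall>v \<in> verts G.
        (u, v) \<in> {(src G e, tgt G e) | e. e \<in> edges G}\<^sup>*)"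

text \<open>A rational vertex is either a vertex, or the point at rational distance t
  from the source along an edge (0 <= t <= len e) or along a half-edge (t >= 0).\<close>

datatype ('v, 'e) pt = Vx 'v | Ep 'e rat

fun valid_pt :: "('v, 'e) rmg \<Rightarrow> ('v, 'e) pt \<Rightarrow> bool" where
  "valid_pt G (Vx v) = (v \<in> verts G)"
| "valid_pt G (Ep e t) =
     ((e \<in> edges G \<and> 0 \<le> t \<and> t \<le> len G e) \<or> (e \<in> hedges G \<and> 0 \<le> t))"

fun cpt :: "('v, 'e) rmg \<Rightarrow> ('v, 'e) pt \<Rightarrow> ('v, 'e) pt" where
  "cpt G (Vx v) = Vx v"
| "cpt G (Ep e t) =
     (if t = 0 then Vx (src G e)
      else if e \<in> edges G \<and> t = len G e then Vx (tgt G e) else Ep e t)"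

definition same_pt :: "('v, 'e) rmg \<Rightarrow> ('v, 'e) pt \<Rightarrow> ('v, 'e) pt \<Rightarrow> bool" where
  "same_pt G p q \<longleftrightarrow> cpt G p = cpt G q \<or>
     (\<exists>e t. e \<in> edges G \<and> 0 < t \<and> t < len G e \<and>
            cpt G p = Ep e t \<and> cpt G q = Ep (inv G e) (len G e - t))"

definition dlt :: "('v, 'e) rmg \<Rightarrow> ('v, 'e) pt \<Rightarrow> ('v, 'e) pt \<Rightarrow> rat" where
  "dlt G x p = (if same_pt G x p then 1 else 0)"

text \<open>A function on rational vertices: compatible with the identifications.\<close>
definition resp :: "('v, 'e) rmg \<Rightarrow> (('v, 'e) pt \<Rightarrow> rat) \<Rightarrow> bool" where
  "resp G f \<longleftrightarrow>
     (\<forall>e \<in> edges G \<union> hedges G. f (Ep e 0) = f (Vx (src G e))) \<and>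
     (\<forall>e \<in> edges G. \<forall>t. 0 \<le> t \<and> t \<le> len G e \<longrightarrow>
         f (Ep e t) = f (Ep (inv G e) (len G e - t)))"

definition cuts :: "('v, 'e) rmg \<Rightarrow> ('v, 'e) pt set \<Rightarrow> 'e \<Rightarrow> rat set" where
  "cuts G P e = {t. 0 < t \<and> (e \<in> edges G \<longrightarrow> t < len G e) \<and>
                    (\<exists>p \<in> P. same_pt G (Ep e t) p)}"

definition ecuts :: "('v, 'e) rmg \<Rightarrow> ('v, 'e) pt set \<Rightarrow> 'e \<Rightarrow> rat set" where
  "ecuts G P e = {0, len G e} \<union> cuts G P e"

text \<open>Start of the (unbounded) half-edge of the subdivided graph lying on the
  half-edge d.\<close>
definition tailst :: "('v, 'e) rmg \<Rightarrow> ('v, 'e) pt set \<Rightarrow> 'e \<Rightarrow> rat" where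
  "tailst G P d = Max ({0} \<union> cuts G P d)"

definition consec :: "rat set \<Rightarrow> (rat \<times> rat) set" where
  "consec C = {(a, c). a \<in> C \<and> c \<in> C \<and> a < c \<and> \<not> (\<exists>m \<in> C. a < m \<and> m < c)}"

text \<open>Omega_log of the graph subdivided at P: polynomial on every segment of an edge,
  polynomial on every bounded segment of a half-edge, affine on the final
  unbounded piece of a half-edge.\<close>
definition omega_logP :: "('v, 'e) rmg \<Rightarrow> ('v, 'e) pt set \<Rightarrow> (('v, 'e) pt \<Rightarrow> rat) \<Rightarrow> bool" where
  "omega_logP G P f \<longleftrightarrow> resp G f \<and>
     (\<forall>e \<in> edges G. \<forall>(a, c) \<in> consec (ecuts G P e).
        \<exists>p. \<forall>s. a \<le> s \<and> s \<le> c \<longrightarrow> f (Ep e s) = poly p s) \<and>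
     (\<forall>d \<in> hedges G. \<forall>(a, c) \<in> consec ({0} \<union> cuts G P d).
        \<exists>p. \<forall>s. a \<le> s \<and> s \<le> c \<longrightarrow> f (Ep d s) = poly p s) \<and>
     (\<forall>d \<in> hedges G. \<exists>\<alpha> \<beta>. \<forall>s. tailst G P d \<le> s \<longrightarrow> f (Ep d s) = \<alpha> + \<beta> * s)"

definition omega_log :: "('v, 'e) rmg \<Rightarrow> (('v, 'e) pt \<Rightarrow> rat) \<Rightarrow> bool" where
  "omega_log G f \<longleftrightarrow> omega_logP G {} f"

definition dplus :: "(('v, 'e) pt \<Rightarrow> rat) \<Rightarrow> 'e \<Rightarrow> rat \<Rightarrow> rat" where
  "dplus f e t = poly (pderiv (THE p. \<exists>\<epsilon>>0. \<forall>s. t \<le> s \<and> s \<le> t + \<epsilon> \<longrightarrow> f (Ep e s) = poly p s)) t"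

definition dminus :: "(('v, 'e) pt \<Rightarrow> rat) \<Rightarrow> 'e \<Rightarrow> rat \<Rightarrow> rat" where
  "dminus f e t = poly (pderiv (THE p. \<exists>\<epsilon>>0. \<forall>s. t - \<epsilon> \<le> s \<and> s \<le> t \<longrightarrow> f (Ep e s) = poly p s)) t"

definition dd :: "(('v, 'e) pt \<Rightarrow> rat) \<Rightarrow> 'e \<Rightarrow> rat \<Rightarrow> rat" where
  "dd f e t = poly (pderiv (pderiv
      (THE p. \<exists>\<epsilon>>0. \<forall>s. t - \<epsilon> \<le> s \<and> s \<le> t + \<epsilon> \<longrightarrow> f (Ep e s) = poly p s))) t"

record ('v, 'e) meas =
  dens :: "'e \<Rightarrow> rat poly"
  vm   :: "'v \<Rightarrow> rat"
  hm   :: "'e \<Rightarrow> rat"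

definition polyint :: "rat poly \<Rightarrow> rat \<Rightarrow> rat \<Rightarrow> rat" where
  "polyint p a c = (\<Sum>i\<le>degree p. coeff p i * (c ^ (i + 1) - a ^ (i + 1)) / of_nat (i + 1))"

text \<open>Measures on Gamma (piecewise polynomial with log poles on the half-edges).
  Coefficients outside the relevant index sets are normalised to 0.\<close>
definition is_meas :: "('v, 'e) rmg \<Rightarrow> ('v, 'e) meas \<Rightarrow> bool" where
  "is_meas G \<mu> \<longleftrightarrow>
     (\<forall>e \<in> edges G. dens \<mu> (inv G e) = pcompose (dens \<mu> e) [:len G e, -1:]) \<and>
     (\<forall>e. e \<notin> edges G \<longrightarrow> dens \<mu> e = 0) \<and>
     (\<forall>v. v \<notin> verts G \<longrightarrow> vm \<mu> v = 0) \<and>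
     (\<forall>e. e \<notin> hedges G \<longrightarrow> hm \<mu> e = 0)"

text \<open>Sum over unoriented edges written as half the sum over oriented edges.\<close>
definition total_mass :: "('v, 'e) rmg \<Rightarrow> ('v, 'e) meas \<Rightarrow> rat" where
  "total_mass G \<mu> = (\<Sum>e\<in>edges G. polyint (dens \<mu> e) 0 (len G e)) / 2
     + (\<Sum>v\<in>verts G. vm \<mu> v) + (\<Sum>e\<in>hedges G. hm \<mu> e)"

definition M0 :: "('v, 'e) rmg \<Rightarrow> ('v, 'e) meas set" where
  "M0 G = {\<mu>. is_meas G \<mu> \<and> total_mass G \<mu> = 0}"

definition fpoly :: "('v, 'e) rmg \<Rightarrow> (('v, 'e) pt \<Rightarrow> rat) \<Rightarrow> 'e \<Rightarrow> rat poly" where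
  "fpoly G f e =
     (if e \<in> edges G then (THE p. \<forall>s. 0 \<le> s \<and> s \<le> len G e \<longrightarrow> f (Ep e s) = poly p s)
      else (THE p. \<forall>s. 0 \<le> s \<longrightarrow> f (Ep e s) = poly p s))"

definition lap :: "('v, 'e) rmg \<Rightarrow> (('v, 'e) pt \<Rightarrow> rat) \<Rightarrow> ('v, 'e) meas" where
  "lap G f =
     \<lparr> dens = (\<lambda>e. if e \<in> edges G then - pderiv (pderiv (fpoly G f e)) else 0),
       vm = (\<lambda>v. if v \<in> verts G then
                   - (\<Sum>e \<in> {e \<in> edges G \<union> hedges G. src G e = v}. poly (pderiv (fpoly G f e)) 0)
                 else 0),
       hm = (\<lambda>e. if e \<in> hedges G then poly (pderiv (fpoly G f e)) 0 else 0) \<rparr>"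

text \<open>Componentwise: no density on the open segments, the prescribed point
  masses at the vertices of the subdivided graph (old vertices and the new
  vertices coming from x and b), and no mass on the half-edges.\<close>
definition lap_is_dipole ::
  "('v, 'e) rmg \<Rightarrow> ('v, 'e) pt \<Rightarrow> ('v, 'e) pt \<Rightarrow> (('v, 'e) pt \<Rightarrow> rat) \<Rightarrow> bool" where
  "lap_is_dipole G x b F \<longleftrightarrow>
     (\<forall>e \<in> edges G \<union> hedges G. \<forall>t. 0 < t \<and> (e \<in> edges G \<longrightarrow> t < len G e) \<and>
         t \<notin> cuts G {x, b} e \<longrightarrow> - dd F e t = 0) \<and>
     (\<forall>v \<in> verts G.
         - (\<Sum>e \<in> {e \<in> edges G \<union> hedges G. src G e = v}. dplus F e 0)
         = dlt G x (Vx v) - dlt G b (Vx v)) \<and>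
     (\<forall>e \<in> edges G \<union> hedges G. \<forall>t \<in> cuts G {x, b} e.
         - (dplus F e t - dminus F e t) = dlt G x (Ep e t) - dlt G b (Ep e t)) \<and>
     (\<forall>d \<in> hedges G. dplus F d (tailst G {x, b} d) = 0)"

text \<open>Integration of a function of Omega_log(Gamma_P) against a measure of Gamma
  transported to the subdivision Gamma_P (the half-edge masses sit at the
  half-edge of Gamma_P, whose source is the point at position tailst).\<close>
definition piece :: "(('v, 'e) pt \<Rightarrow> rat) \<Rightarrow> 'e \<Rightarrow> rat \<Rightarrow> rat \<Rightarrow> rat poly" where
  "piece F e a c = (THE p. \<forall>s. a \<le> s \<and> s \<le> c \<longrightarrow> F (Ep e s) = poly p s)"

definition integP ::
  "('v, 'e) rmg \<Rightarrow> ('v, 'e) pt set \<Rightarrow> (('v, 'e) pt \<Rightarrow> rat) \<Rightarrow> ('v, 'e) meas \<Rightarrow> rat" where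
  "integP G P F \<mu> =
     (\<Sum>e\<in>edges G. \<Sum>(a, c) \<in> consec (ecuts G P e). polyint (piece F e a c * dens \<mu> e) a c) / 2
     + (\<Sum>v\<in>verts G. vm \<mu> v * F (Vx v))
     + (\<Sum>d\<in>hedges G. hm \<mu> d * F (Ep d (tailst G P d)))"

text \<open>Height pairing <x - b, mu> = integral of Delta^{-1}(x - b) against mu,
  computed on the subdivision at {x, b}.\<close>
definition pair_pt :: "('v, 'e) rmg \<Rightarrow> ('v, 'e) pt \<Rightarrow> ('v, 'e) pt \<Rightarrow> ('v, 'e) meas \<Rightarrow> rat" where
  "pair_pt G x b \<mu> =
     integP G {x, b} (SOME F. omega_logP G {x, b} F \<and> lap_is_dipole G x b F) \<mu>"

end

(* Since mu has total mass 0 it has a potential g with Delta g = mu: on each edge, g is the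
   solution of -g'' = mu with zero boundary values plus the linear interpolation of vertex
   values, and the vertex values solve a discrete Laplace equation for the conductances
   1 / len e, which is solvable on the connected graph (by Kron reduction).
   The pairing <x - b, mu> is the integral of a Green function F of x - b (Delta F = x - b)
   against mu = Delta g, and Green's identity on the graph subdivided at x and b turns it
   into the integral of g against x - b, that is g x - g b.  So x |-> <x - b, mu> differs
   from g by a constant, lies in Omega_log and has Laplacian mu.
   The Green function F itself is a potential of x - b pushed to the end points of the edges
   through x and b, corrected on these edges by a linear term and a ramp kinked at x, resp. b. *)

theory Submission
  imports Defs
begin

lemma poly_eq_if_eq_on_infinite:
  fixes p q :: "'a::idom poly"
  assumes "infinite S" and "\<And>s. s \<in> S \<Longrightarrow> poly p s = poly q s"
  shows "p = q"
proof (rule ccontr)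
  assume "p \<noteq> q"
  hence "finite {x. poly (p - q) x = 0}" by (intro poly_roots_finite) simp
  moreover have "S \<subseteq> {x. poly (p - q) x = 0}" using assms(2) by auto
  ultimately show False using assms(1) finite_subset by blast
qed

lemma the_poly_eq:
  fixes p :: "'a::idom poly"
  assumes "infinite S" and "\<And>s. s \<in> S \<Longrightarrow> f s = poly p s"
  shows "(THE q. \<forall>s\<in>S. f s = poly q s) = p"
  using assms by (intro the_equality) (auto intro!: poly_eq_if_eq_on_infinite[OF assms(1)])

lemma the_poly_germ_eq:
  fixes p :: "'a::idom poly" and I :: "rat \<Rightarrow> 'a set"
  assumes mono: "\<And>\<epsilon> \<epsilon>'. 0 < \<epsilon> \<Longrightarrow> \<epsilon> \<le> \<epsilon>' \<Longrightarrow> I \<epsilon> \<subseteq> I \<epsilon>'"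
    and inf: "\<And>\<epsilon>. 0 < \<epsilon> \<Longrightarrow> infinite (I \<epsilon>)"
    and "0 < \<epsilon>" and "\<And>s. s \<in> I \<epsilon> \<Longrightarrow> f s = poly p s"
  shows "(THE q. \<exists>\<epsilon>>0. \<forall>s\<in>I \<epsilon>. f s = poly q s) = p"
proof (rule the_equality)
  show "\<exists>\<epsilon>>0. \<forall>s\<in>I \<epsilon>. f s = poly p s" using assms(3,4) by blast
next
  fix q assume "\<exists>\<epsilon>'>0. \<forall>s\<in>I \<epsilon>'. f s = poly q s"
  then obtain \<epsilon>' where "0 < \<epsilon>'" and q: "\<And>s. s \<in> I \<epsilon>' \<Longrightarrow> f s = poly q s" by blast
  have "I (min \<epsilon> \<epsilon>') \<subseteq> I \<epsilon> \<inter> I \<epsilon>'" using mono \<open>0 < \<epsilon>\<close> \<open>0 < \<epsilon>'\<close> by simp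
  then show "q = p" using inf[of "min \<epsilon> \<epsilon>'"] \<open>0 < \<epsilon>\<close> \<open>0 < \<epsilon>'\<close> assms(4) q
    by (intro poly_eq_if_eq_on_infinite[of "I (min \<epsilon> \<epsilon>')"]) (simp, metis IntE subsetD)
qed

lemma pderiv_eq_0_imp_poly_const:
  fixes p :: "'a::{idom, ring_char_0} poly"
  assumes "pderiv p = 0"
  shows "poly p x = poly p y"
  using assms by (auto simp: pderiv_eq_0_iff elim!: degree_eq_zeroE)

lemma pderiv2_eq_0_imp_pderiv_const:
  fixes p :: "'a::{idom, ring_char_0} poly"
  assumes "pderiv (pderiv p) = 0"
  shows "pderiv p = [:poly (pderiv p) 0:]"
  using assms by (auto simp: pderiv_eq_0_iff elim!: degree_eq_zeroE)

lemma pderiv2_eq_0_imp_poly_affine: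
  fixes p :: "'a::{idom, ring_char_0} poly"
  assumes "pderiv (pderiv p) = 0"
  shows "poly p x = poly p 0 + poly (pderiv p) 0 * x"
proof -
  define \<sigma> where "\<sigma> = poly (pderiv p) 0"
  have p': "pderiv p = [:\<sigma>:]" unfolding \<sigma>_def by (rule pderiv2_eq_0_imp_pderiv_const[OF assms])
  have "pderiv (p - [:0, \<sigma>:]) = 0" by (simp add: p' pderiv_diff pderiv_pCons)
  hence "poly (p - [:0, \<sigma>:]) x = poly (p - [:0, \<sigma>:]) 0" by (rule pderiv_eq_0_imp_poly_const)
  thus ?thesis by (simp add: \<sigma>_def algebra_simps)
qed

lemma affine_poly_eq_0_if_two_zeros:
  fixes r :: "'a::{field, ring_char_0} poly"
  assumes "pderiv (pderiv r) = 0" "poly r 0 = 0" "poly r l = 0" "l \<noteq> 0"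
  shows "r = 0"
proof -
  have affine: "poly r x = poly (pderiv r) 0 * x" for x
    using pderiv2_eq_0_imp_poly_affine[OF assms(1)] assms(2) by simp
  then have "poly (pderiv r) 0 = 0" using assms(3,4) by (metis mult_eq_0_iff)
  then show ?thesis using affine by (simp add: poly_eq_poly_eq_iff[symmetric] fun_eq_iff)
qed

definition antideriv :: "'a::field_char_0 poly \<Rightarrow> 'a poly" where
  "antideriv p = (\<Sum>i\<le>degree p. monom (coeff p i / of_nat (i + 1)) (i + 1))"

lemma pderiv_antideriv: "pderiv (antideriv p) = p"
proof -
  have "pderiv (antideriv p) = (\<Sum>i\<le>degree p. pderiv (monom (coeff p i / of_nat (i + 1)) (i + 1)))"
    unfolding antideriv_def using higher_pderiv_sum[of 1] by simp
  also have "\<dots> = (\<Sum>i\<le>degree p. monom (coeff p i) i)"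
    by (intro sum.cong refl) (simp add: pderiv_monom del: of_nat_Suc)
  also have "\<dots> = p" by (rule poly_as_sum_of_monoms)
  finally show ?thesis .
qed

lemma poly_antideriv_0 [simp]: "poly (antideriv p) 0 = 0"
  unfolding antideriv_def by (simp add: poly_sum poly_monom)

lemma polyint_eq_poly_diff:
  assumes "pderiv P = p"
  shows "polyint p a c = poly P c - poly P a"
proof -
  have "pderiv (P - antideriv p) = 0" using assms by (simp add: pderiv_diff pderiv_antideriv)
  hence "poly (P - antideriv p) c = poly (P - antideriv p) a" by (rule pderiv_eq_0_imp_poly_const)
  moreover have "polyint p a c = poly (antideriv p) c - poly (antideriv p) a"
    unfolding polyint_def antideriv_def
    by (simp add: poly_sum poly_monom sum_subtractf[symmetric] diff_divide_distrib algebra_simps)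
  ultimately show ?thesis by simp
qed

lemma polyint_green_affine:
  fixes f q :: "rat poly"
  assumes "pderiv (pderiv f) = 0"
  shows "polyint (f * - pderiv (pderiv q)) a c
    = (poly (pderiv f) c * poly q c - poly f c * poly (pderiv q) c)
      - (poly (pderiv f) a * poly q a - poly f a * poly (pderiv q) a)"
proof -
  define \<sigma> where "\<sigma> = poly (pderiv f) 0"
  have f': "pderiv f = [:\<sigma>:]" unfolding \<sigma>_def by (rule pderiv2_eq_0_imp_pderiv_const[OF assms])
  have "pderiv (smult \<sigma> q - f * pderiv q) = f * - pderiv (pderiv q)"
    using f' by (simp add: pderiv_diff pderiv_mult pderiv_smult algebra_simps)
  hence "polyint (f * - pderiv (pderiv q)) a c
      = poly (smult \<sigma> q - f * pderiv q) c - poly (smult \<sigma> q - f * pderiv q) a"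
    by (rule polyint_eq_poly_diff)
  thus ?thesis using f' by simp
qed

lemma pderiv_pcompose_reflect:
  fixes p :: "'a::idom poly"
  shows "pderiv (pcompose p [:l, -1:]) = - pcompose (pderiv p) [:l, -1:]"
  by (simp add: pderiv_pcompose pderiv_pCons)

lemma poly_pcompose_reflect [simp]:
  fixes p :: "'a::comm_ring_1 poly"
  shows "poly (pcompose p [:l, -1:]) s = poly p (l - s)"
  by (simp add: poly_pcompose)

lemma dplus_eq:
  assumes "0 < \<epsilon>" and "\<And>s. t \<le> s \<Longrightarrow> s \<le> t + \<epsilon> \<Longrightarrow> f (Ep e s) = poly p s"
  shows "dplus f e t = poly (pderiv p) t"
proof -
  have "(THE q. \<exists>\<epsilon>>0. \<forall>s\<in>{t..t + \<epsilon>}. f (Ep e s) = poly q s) = p"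
    by (rule the_poly_germ_eq[where I = "\<lambda>\<epsilon>. {t..t + \<epsilon>}", OF _ _ assms(1)]) (use assms(2) in auto)
  thus ?thesis unfolding dplus_def Ball_def atLeastAtMost_iff by simp
qed

lemma dminus_eq:
  assumes "0 < \<epsilon>" and "\<And>s. t - \<epsilon> \<le> s \<Longrightarrow> s \<le> t \<Longrightarrow> f (Ep e s) = poly p s"
  shows "dminus f e t = poly (pderiv p) t"
proof -
  have "(THE q. \<exists>\<epsilon>>0. \<forall>s\<in>{t - \<epsilon>..t}. f (Ep e s) = poly q s) = p"
    by (rule the_poly_germ_eq[where I = "\<lambda>\<epsilon>. {t - \<epsilon>..t}", OF _ _ assms(1)]) (use assms(2) in auto)
  thus ?thesis unfolding dminus_def Ball_def atLeastAtMost_iff by simp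
qed

lemma dd_eq:
  assumes "0 < \<epsilon>" and "\<And>s. t - \<epsilon> \<le> s \<Longrightarrow> s \<le> t + \<epsilon> \<Longrightarrow> f (Ep e s) = poly p s"
  shows "dd f e t = poly (pderiv (pderiv p)) t"
proof -
  have "(THE q. \<exists>\<epsilon>>0. \<forall>s\<in>{t - \<epsilon>..t + \<epsilon>}. f (Ep e s) = poly q s) = p"
    by (rule the_poly_germ_eq[where I = "\<lambda>\<epsilon>. {t - \<epsilon>..t + \<epsilon>}", OF _ _ assms(1)]) (use assms(2) in auto)
  thus ?thesis unfolding dd_def Ball_def atLeastAtMost_iff by simp
qed

lemma piece_eq:
  assumes "a < c" and "\<And>s. a \<le> s \<Longrightarrow> s \<le> c \<Longrightarrow> F (Ep e s) = poly p s"
  shows "piece F e a c = p"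
proof -
  have "(THE q. \<forall>s\<in>{a..c}. F (Ep e s) = poly q s) = p"
    by (rule the_poly_eq) (use assms in auto)
  thus ?thesis unfolding piece_def Ball_def atLeastAtMost_iff by simp
qed

lemma fpoly_edge:
  assumes "e \<in> edges G" and "0 < len G e" and "\<And>s. 0 \<le> s \<Longrightarrow> s \<le> len G e \<Longrightarrow> f (Ep e s) = poly p s"
  shows "fpoly G f e = p"
proof -
  have "(THE q. \<forall>s\<in>{0..len G e}. f (Ep e s) = poly q s) = p"
    by (rule the_poly_eq) (use assms in auto)
  thus ?thesis unfolding fpoly_def Ball_def atLeastAtMost_iff using assms(1) by simp
qed

lemma fpoly_hedge:
  assumes "e \<notin> edges G" and "\<And>s. 0 \<le> s \<Longrightarrow> f (Ep e s) = poly p s"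
  shows "fpoly G f e = p"
proof -
  have "infinite {0::rat..}" by (rule infinite_super[of "{0..1}"]) auto
  then have "(THE q. \<forall>s\<in>{0..}. f (Ep e s) = poly q s) = p"
    by (rule the_poly_eq) (use assms in auto)
  thus ?thesis unfolding fpoly_def Ball_def atLeast_iff using assms(1) by simp
qed

lemma consec_iff:
  "(a, c) \<in> consec C \<longleftrightarrow> a \<in> C \<and> c \<in> C \<and> a < c \<and> \<not> (\<exists>m \<in> C. a < m \<and> m < c)"
  unfolding consec_def by simp

lemma consec_not_between: "(a, c) \<in> consec C \<Longrightarrow> t \<in> C \<Longrightarrow> c \<le> t \<or> t \<le> (a::rat)"
  unfolding consec_def by force

lemma consec_predecessor:
  fixes C :: "rat set"
  assumes "finite C" "c \<in> C" "Min C < c"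
  shows "(Max {y \<in> C. y < c}, c) \<in> consec C"
proof -
  have "C \<noteq> {}" using assms by auto
  hence ne: "{y \<in> C. y < c} \<noteq> {}" using assms Min_in[of C] by (metis (mono_tags, lifting) empty_Collect_eq)
  have fin: "finite {y \<in> C. y < c}" using assms by simp
  have M: "Max {y \<in> C. y < c} \<in> {y \<in> C. y < c}" using Max_in[OF fin ne] .
  have ge: "\<And>m. m \<in> C \<Longrightarrow> m < c \<Longrightarrow> m \<le> Max {y \<in> C. y < c}" using fin by (intro Max_ge) auto
  show ?thesis unfolding consec_iff
  proof (intro conjI)
    show "\<not> (\<exists>m\<in>C. Max {y \<in> C. y < c} < m \<and> m < c)" using ge by (meson leD)
  qed (use M assms in auto)
qed

lemma consec_successor:
  fixes C :: "rat set"
  assumes "finite C" "a \<in> C" "a < Max C"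
  shows "(a, Min {y \<in> C. a < y}) \<in> consec C"
proof -
  have "C \<noteq> {}" using assms by auto
  hence ne: "{y \<in> C. a < y} \<noteq> {}" using assms Max_in[of C] by (metis (mono_tags, lifting) empty_Collect_eq)
  have fin: "finite {y \<in> C. a < y}" using assms by simp
  have M: "Min {y \<in> C. a < y} \<in> {y \<in> C. a < y}" using Min_in[OF fin ne] .
  have ge: "\<And>m. m \<in> C \<Longrightarrow> a < m \<Longrightarrow> Min {y \<in> C. a < y} \<le> m" using fin by (intro Min_le) auto
  show ?thesis unfolding consec_iff
  proof (intro conjI)
    show "\<not> (\<exists>m\<in>C. a < m \<and> m < Min {y \<in> C. a < y})" using ge by (meson leD)
  qed (use M assms in auto)
qed

lemma bij_betw_snd_consec:
  fixes C :: "rat set"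
  assumes "finite C"
  shows "bij_betw snd (consec C) (C - {Min C})"
proof (rule bij_betwI')
  fix x y assume "x \<in> consec C" "y \<in> consec C"
  then obtain a c a' c' where xy: "x = (a, c)" "y = (a', c')" "(a, c) \<in> consec C" "(a', c') \<in> consec C"
    by (metis prod.collapse)
  show "(snd x = snd y) = (x = y)"
  proof
    assume "snd x = snd y"
    hence "c = c'" using xy by simp
    moreover have "a = a'"
      using xy \<open>c = c'\<close> unfolding consec_def by (auto, metis linorder_neqE)
    ultimately show "x = y" using xy by simp
  qed simp
next
  fix x assume "x \<in> consec C"
  then obtain a c where "x = (a, c)" "(a, c) \<in> consec C" by (metis prod.collapse)
  moreover have "Min C \<le> a" using assms \<open>(a, c) \<in> consec C\<close> unfolding consec_def by auto
  ultimately show "snd x \<in> C - {Min C}" unfolding consec_def by auto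
next
  fix c assume "c \<in> C - {Min C}"
  hence "Min C < c" using assms Min_le[OF assms] by (metis Diff_iff insertCI order_le_less)
  thus "\<exists>x\<in>consec C. c = snd x" using consec_predecessor[OF assms _ \<open>Min C < c\<close>] \<open>c \<in> C - {Min C}\<close> by force
qed

lemma bij_betw_fst_consec:
  fixes C :: "rat set"
  assumes "finite C"
  shows "bij_betw fst (consec C) (C - {Max C})"
proof (rule bij_betwI')
  fix x y assume "x \<in> consec C" "y \<in> consec C"
  then obtain a c a' c' where xy: "x = (a, c)" "y = (a', c')" "(a, c) \<in> consec C" "(a', c') \<in> consec C"
    by (metis prod.collapse)
  show "(fst x = fst y) = (x = y)"
  proof
    assume "fst x = fst y"
    hence "a = a'" using xy by simp
    moreover have "c = c'"
      using xy \<open>a = a'\<close> unfolding consec_def by (auto, metis linorder_neqE)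
    ultimately show "x = y" using xy by simp
  qed simp
next
  fix x assume "x \<in> consec C"
  then obtain a c where "x = (a, c)" "(a, c) \<in> consec C" by (metis prod.collapse)
  moreover have "c \<le> Max C" using assms \<open>(a, c) \<in> consec C\<close> unfolding consec_def by auto
  ultimately show "fst x \<in> C - {Max C}" unfolding consec_def by auto
next
  fix a assume "a \<in> C - {Max C}"
  hence "a < Max C" using assms Max_ge[OF assms] by (metis Diff_iff insertCI order_le_less)
  thus "\<exists>x\<in>consec C. a = fst x" using consec_successor[OF assms _ \<open>a < Max C\<close>] \<open>a \<in> C - {Max C}\<close> by force
qed

lemma sum_consec_telescope:
  fixes C :: "rat set" and h :: "rat \<Rightarrow> 'a::ab_group_add"
  assumes "finite C" "C \<noteq> {}"
  shows "(\<Sum>(a, c)\<in>consec C. h c - h a) = h (Max C) - h (Min C)"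
proof -
  have "(\<Sum>(a, c)\<in>consec C. h c - h a) = (\<Sum>x\<in>consec C. h (snd x)) - (\<Sum>x\<in>consec C. h (fst x))"
    by (simp add: case_prod_beta sum_subtractf)
  also have "(\<Sum>x\<in>consec C. h (snd x)) = (\<Sum>c\<in>C - {Min C}. h c)"
    using sum.reindex_bij_betw[OF bij_betw_snd_consec[OF assms(1)]] .
  also have "(\<Sum>x\<in>consec C. h (fst x)) = (\<Sum>c\<in>C - {Max C}. h c)"
    using sum.reindex_bij_betw[OF bij_betw_fst_consec[OF assms(1)]] .
  also have "(\<Sum>c\<in>C - {Min C}. h c) = (\<Sum>c\<in>C. h c) - h (Min C)"
    using assms Min_in by (simp add: sum_diff1)
  also have "(\<Sum>c\<in>C - {Max C}. h c) = (\<Sum>c\<in>C. h c) - h (Max C)"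
    using assms Max_in by (simp add: sum_diff1)
  finally show ?thesis by simp
qed

lemma sum_consec_by_parts:
  fixes C :: "rat set" and m p :: "rat \<Rightarrow> 'a::ab_group_add"
  assumes "finite C" "C \<noteq> {}"
  shows "(\<Sum>(a, c)\<in>consec C. m c - p a)
    = (\<Sum>c\<in>C - {Min C}. m c - p c) + p (Max C) - p (Min C)"
proof -
  have "(\<Sum>(a, c)\<in>consec C. m c - p a)
      = (\<Sum>(a, c)\<in>consec C. m c - p c) + (\<Sum>(a, c)\<in>consec C. p c - p a)"
    by (simp add: case_prod_beta sum.distrib[symmetric])
  also have "(\<Sum>(a, c)\<in>consec C. m c - p c) = (\<Sum>c\<in>C - {Min C}. m c - p c)"
    using sum.reindex_bij_betw[OF bij_betw_snd_consec[OF assms(1)], of "\<lambda>c. m c - p c"]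
    by (simp add: case_prod_beta)
  also have "(\<Sum>(a, c)\<in>consec C. p c - p a) = p (Max C) - p (Min C)"
    by (rule sum_consec_telescope[OF assms])
  finally show ?thesis by (simp add: algebra_simps)
qed

section \<open>Solving the discrete Laplace equation\<close>

definition weights_connected :: "'a set \<Rightarrow> ('a \<Rightarrow> 'a \<Rightarrow> rat) \<Rightarrow> bool" where
  "weights_connected V w \<longleftrightarrow>
     (\<forall>S. S \<subseteq> V \<longrightarrow> S \<noteq> {} \<longrightarrow> S \<noteq> V \<longrightarrow> (\<exists>u\<in>S. \<exists>u'\<in>V - S. 0 < w u u'))"

text \<open>The weights of the Kron reduction eliminating the vertex v, of total weight D.\<close>
lemma weights_connected_kron_reduction:
  fixes w :: "'a \<Rightarrow> 'a \<Rightarrow> rat"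
  assumes conn: "weights_connected (insert v F) w" and "v \<notin> F"
    and nonneg: "\<And>u u'. 0 \<le> w u u'" and "0 < D"
  shows "weights_connected F (\<lambda>u u'. w u u' + w u v * w v u' / D)"
  unfolding weights_connected_def
proof (intro allI impI)
  fix S assume S: "S \<subseteq> F" "S \<noteq> {}" "S \<noteq> F"
  have le: "w u u' \<le> w u u' + w u v * w v u' / D" for u u' using nonneg \<open>0 < D\<close> by simp
  show "\<exists>u\<in>S. \<exists>u'\<in>F - S. 0 < w u u' + w u v * w v u' / D"
  proof (cases "\<exists>u\<in>S. \<exists>u'\<in>F - S. 0 < w u u'")
    case True
    then show ?thesis using le by (meson less_le_trans)
  next
    case no_direct: False
    have "S \<subseteq> insert v F" "S \<noteq> insert v F" using S \<open>v \<notin> F\<close> by auto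
    with conn S(2) obtain u u' where u: "u \<in> S" "u' \<in> insert v F - S" "0 < w u u'"
      unfolding weights_connected_def by blast
    with no_direct have "u' = v" by blast
    obtain z where "z \<in> F - S" using S by auto
    then have "insert v S \<subseteq> insert v F" "insert v S \<noteq> {}" "insert v S \<noteq> insert v F"
      using S \<open>v \<notin> F\<close> by auto
    with conn obtain y y' where y: "y \<in> insert v S" "y' \<in> insert v F - insert v S" "0 < w y y'"
      unfolding weights_connected_def by blast
    with no_direct have "y = v" "y' \<in> F - S" by auto
    then have "0 < w u y' + w u v * w v y' / D"
      using u y \<open>u' = v\<close> \<open>0 < D\<close> nonneg[of u y'] by (simp add: add_nonneg_pos)
    then show ?thesis using u(1) \<open>y' \<in> F - S\<close> by blast
  qed
qed

text \<open>The eliminated value is recovered as (r v + (\<Sum>u\<in>F. w v u * \<phi> u)) / D.\<close>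
lemma kron_reduction_solution:
  fixes w :: "'a \<Rightarrow> 'a \<Rightarrow> rat"
  assumes "finite F" "v \<notin> F" and D: "D = (\<Sum>u\<in>F. w v u)" "0 < D"
    and sol: "\<And>y. y \<in> F \<Longrightarrow>
      (\<Sum>u\<in>F. (w y u + w y v * w v u / D) * (\<phi> y - \<phi> u)) = r y + w y v * r v / D"
  shows "\<exists>\<psi>. \<forall>y\<in>insert v F. (\<Sum>u\<in>insert v F. w y u * (\<psi> y - \<psi> u)) = r y"
proof (intro exI ballI)
  define A where "A = (\<Sum>u\<in>F. w v u * \<phi> u)"
  define \<psi> where "\<psi> = \<phi>(v := (r v + A) / D)"
  have \<psi>F: "\<psi> u = \<phi> u" if "u \<in> F" for u using that \<open>v \<notin> F\<close> by (auto simp: \<psi>_def)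
  have at_v: "(\<Sum>u\<in>F. w v u * (c - \<phi> u)) = D * c - A" for c
    by (simp add: D A_def algebra_simps sum_subtractf sum_distrib_right sum_distrib_left)
  fix y assume "y \<in> insert v F"
  then consider "y = v" | "y \<in> F" by blast
  then show "(\<Sum>u\<in>insert v F. w y u * (\<psi> y - \<psi> u)) = r y"
  proof cases
    case 1
    have "(\<Sum>u\<in>insert v F. w y u * (\<psi> y - \<psi> u)) = (\<Sum>u\<in>F. w v u * (\<psi> v - \<phi> u))"
      using 1 \<psi>F assms(1,2) by simp
    also have "\<dots> = r v" unfolding at_v using \<open>0 < D\<close> by (simp add: \<psi>_def)
    finally show ?thesis using 1 by simp
  next
    case 2
    have "(\<Sum>u\<in>insert v F. w y u * (\<psi> y - \<psi> u))
        = w y v * (\<phi> y - \<psi> v) + (\<Sum>u\<in>F. w y u * (\<phi> y - \<phi> u))"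
      using 2 \<psi>F assms(1,2) by simp
    also have "(\<Sum>u\<in>F. w y u * (\<phi> y - \<phi> u))
        = r y + w y v * r v / D - w y v / D * (\<Sum>u\<in>F. w v u * (\<phi> y - \<phi> u))"
    proof -
      have "(w y u + w y v * w v u / D) * c = w y u * c + w y v / D * (w v u * c)" for u c
        by (simp add: algebra_simps)
      then show ?thesis using sol[OF 2] by (simp only: sum.distrib sum_distrib_left)
    qed
    finally show ?thesis unfolding at_v using \<open>0 < D\<close> by (simp add: \<psi>_def field_simps)
  qed
qed

lemma weighted_laplacian_solvable:
  fixes w :: "'a \<Rightarrow> 'a \<Rightarrow> rat"
  assumes "finite V" and "\<And>u u'. w u u' = w u' u" and "\<And>u u'. 0 \<le> w u u'"
    and "weights_connected V w" and "(\<Sum>v\<in>V. r v) = 0"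
  shows "\<exists>\<phi>. \<forall>v\<in>V. (\<Sum>u\<in>V. w v u * (\<phi> v - \<phi> u)) = r v"
  using assms
proof (induction V arbitrary: w r rule: finite_induct)
  case empty
  then show ?case by simp
next
  case (insert v F)
  show ?case
  proof (cases "F = {}")
    case True
    then show ?thesis using insert.prems by simp
  next
    case False
    define D where "D = (\<Sum>u\<in>F. w v u)"
    have "{v} \<subseteq> insert v F" "{v} \<noteq> {}" "{v} \<noteq> insert v F" using False insert.hyps by auto
    then obtain u0 where "u0 \<in> F" "0 < w v u0"
      using insert.prems(3) unfolding weights_connected_def by blast
    moreover have "w v u0 \<le> D" unfolding D_def
      using \<open>u0 \<in> F\<close> insert.hyps(1) insert.prems(2) by (intro member_le_sum) auto
    ultimately have "0 < D" by simp
    define r' where "r' u = r u + w u v * r v / D" for u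
    have "(\<Sum>u\<in>F. r' u) = (\<Sum>u\<in>F. r u) + (\<Sum>u\<in>F. w v u) * r v / D"
      unfolding r'_def
      by (simp add: sum.distrib sum_divide_distrib[symmetric] sum_distrib_right insert.prems(1))
    also have "\<dots> = 0"
      using insert.prems(4) insert.hyps \<open>0 < D\<close> by (simp add: D_def[symmetric] add.commute)
    finally have "(\<Sum>u\<in>F. r' u) = 0" .
    with insert.IH[of "\<lambda>u u'. w u u' + w u v * w v u' / D" r'] obtain \<phi> where
      "\<forall>y\<in>F. (\<Sum>u\<in>F. (w y u + w y v * w v u / D) * (\<phi> y - \<phi> u)) = r' y"
      using insert.prems(1,2) \<open>0 < D\<close>
        weights_connected_kron_reduction[OF insert.prems(3) insert.hyps(2) insert.prems(2) \<open>0 < D\<close>]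
      by (auto simp: mult.commute)
    then show ?thesis
      using kron_reduction_solution[of F v D w \<phi> r] insert.hyps D_def \<open>0 < D\<close>
      unfolding r'_def by blast
  qed
qed

definition ramps :: "rat poly \<Rightarrow> rat \<Rightarrow> rat \<Rightarrow> rat \<Rightarrow> rat \<Rightarrow> rat \<Rightarrow> rat" where
  "ramps q k1 t1 k2 t2 s = poly q s + k1 * max 0 (s - t1) + k2 * max 0 (s - t2)"

definition ramps_poly_right :: "rat poly \<Rightarrow> rat \<Rightarrow> rat \<Rightarrow> rat \<Rightarrow> rat \<Rightarrow> rat \<Rightarrow> rat poly" where
  "ramps_poly_right q k1 t1 k2 t2 t =
     q + (if t1 \<le> t then smult k1 [:-t1, 1:] else 0) + (if t2 \<le> t then smult k2 [:-t2, 1:] else 0)"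

definition ramps_poly_left :: "rat poly \<Rightarrow> rat \<Rightarrow> rat \<Rightarrow> rat \<Rightarrow> rat \<Rightarrow> rat \<Rightarrow> rat poly" where
  "ramps_poly_left q k1 t1 k2 t2 t =
     q + (if t1 < t then smult k1 [:-t1, 1:] else 0) + (if t2 < t then smult k2 [:-t2, 1:] else 0)"

lemma pderiv2_ramps_poly_right:
  "pderiv (pderiv (ramps_poly_right q k1 t1 k2 t2 t)) = pderiv (pderiv q)"
  unfolding ramps_poly_right_def by (simp add: pderiv_add pderiv_smult pderiv_pCons)

lemma poly_pderiv_ramps_poly_right:
  "poly (pderiv (ramps_poly_right q k1 t1 k2 t2 t)) x
     = poly (pderiv q) x + (if t1 \<le> t then k1 else 0) + (if t2 \<le> t then k2 else 0)"
  unfolding ramps_poly_right_def by (simp add: pderiv_add pderiv_smult pderiv_pCons)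

lemma poly_pderiv_ramps_poly_left:
  "poly (pderiv (ramps_poly_left q k1 t1 k2 t2 t)) x
     = poly (pderiv q) x + (if t1 < t then k1 else 0) + (if t2 < t then k2 else 0)"
  unfolding ramps_poly_left_def by (simp add: pderiv_add pderiv_smult pderiv_pCons)

lemma ramps_eq_poly_right:
  assumes "a \<le> s" "s \<le> c" "k1 \<noteq> 0 \<longrightarrow> c \<le> t1 \<or> t1 \<le> a" "k2 \<noteq> 0 \<longrightarrow> c \<le> t2 \<or> t2 \<le> a"
  shows "ramps q k1 t1 k2 t2 s = poly (ramps_poly_right q k1 t1 k2 t2 a) s"
proof -
  have "k1 * max 0 (s - t1) = (if t1 \<le> a then k1 * (s - t1) else 0)"
    using assms by (cases "k1 = 0") (auto simp: max_def)
  moreover have "k2 * max 0 (s - t2) = (if t2 \<le> a then k2 * (s - t2) else 0)"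
    using assms by (cases "k2 = 0") (auto simp: max_def)
  ultimately show ?thesis unfolding ramps_def ramps_poly_right_def by (simp add: algebra_simps)
qed

lemma ramps_germ_right:
  assumes "0 < \<epsilon>0"
  obtains \<epsilon> where "0 < \<epsilon>" "\<epsilon> \<le> \<epsilon>0"
    "\<And>s. t \<le> s \<Longrightarrow> s \<le> t + \<epsilon> \<Longrightarrow> ramps q k1 t1 k2 t2 s = poly (ramps_poly_right q k1 t1 k2 t2 t) s"
proof
  define \<epsilon> where "\<epsilon> = min \<epsilon>0 (min (if t < t1 then t1 - t else 1) (if t < t2 then t2 - t else 1))"
  show "0 < \<epsilon>" "\<epsilon> \<le> \<epsilon>0" unfolding \<epsilon>_def using assms by auto
  fix s assume "t \<le> s" "s \<le> t + \<epsilon>"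
  moreover have "k1 \<noteq> 0 \<longrightarrow> t + \<epsilon> \<le> t1 \<or> t1 \<le> t" "k2 \<noteq> 0 \<longrightarrow> t + \<epsilon> \<le> t2 \<or> t2 \<le> t"
    unfolding \<epsilon>_def by auto
  ultimately show "ramps q k1 t1 k2 t2 s = poly (ramps_poly_right q k1 t1 k2 t2 t) s"
    by (rule ramps_eq_poly_right)
qed

lemma ramps_germ_left:
  assumes "0 < \<epsilon>0"
  obtains \<epsilon> where "0 < \<epsilon>" "\<epsilon> \<le> \<epsilon>0"
    "\<And>s. t - \<epsilon> \<le> s \<Longrightarrow> s \<le> t \<Longrightarrow> ramps q k1 t1 k2 t2 s = poly (ramps_poly_left q k1 t1 k2 t2 t) s"
proof
  define \<epsilon> where "\<epsilon> = min \<epsilon>0 (min (if t1 < t then t - t1 else 1) (if t2 < t then t - t2 else 1))"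
  show "0 < \<epsilon>" "\<epsilon> \<le> \<epsilon>0" unfolding \<epsilon>_def using assms by auto
  fix s assume s: "t - \<epsilon> \<le> s" "s \<le> t"
  have "k1 * max 0 (s - t1) = (if t1 < t then k1 * (s - t1) else 0)"
    using s unfolding \<epsilon>_def by (auto simp: max_def)
  moreover have "k2 * max 0 (s - t2) = (if t2 < t then k2 * (s - t2) else 0)"
    using s unfolding \<epsilon>_def by (auto simp: max_def)
  ultimately show "ramps q k1 t1 k2 t2 s = poly (ramps_poly_left q k1 t1 k2 t2 t) s"
    unfolding ramps_def ramps_poly_left_def by (simp add: algebra_simps)
qed

lemma ramps_germ_off_kinks:
  assumes "0 < \<epsilon>0" "k1 \<noteq> 0 \<longrightarrow> t1 \<noteq> t" "k2 \<noteq> 0 \<longrightarrow> t2 \<noteq> t"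
  obtains \<epsilon> where "0 < \<epsilon>" "\<epsilon> \<le> \<epsilon>0"
    "\<And>s. t - \<epsilon> \<le> s \<Longrightarrow> s \<le> t + \<epsilon> \<Longrightarrow>
       ramps q k1 t1 k2 t2 s = poly (ramps_poly_right q k1 t1 k2 t2 (t - \<epsilon>)) s"
proof
  define \<epsilon> where
    "\<epsilon> = min \<epsilon>0 (min (if t1 \<noteq> t then \<bar>t1 - t\<bar> else 1) (if t2 \<noteq> t then \<bar>t2 - t\<bar> else 1))"
  show "0 < \<epsilon>" "\<epsilon> \<le> \<epsilon>0" unfolding \<epsilon>_def using assms by auto
  fix s assume "t - \<epsilon> \<le> s" "s \<le> t + \<epsilon>"
  moreover have "k1 \<noteq> 0 \<longrightarrow> t + \<epsilon> \<le> t1 \<or> t1 \<le> t - \<epsilon>" "k2 \<noteq> 0 \<longrightarrow> t + \<epsilon> \<le> t2 \<or> t2 \<le> t - \<epsilon>"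
    using assms(2,3) unfolding \<epsilon>_def by (auto simp: abs_if)
  ultimately show "ramps q k1 t1 k2 t2 s = poly (ramps_poly_right q k1 t1 k2 t2 (t - \<epsilon>)) s"
    by (rule ramps_eq_poly_right)
qed

section \<open>Potentials of measures on a metrised graph\<close>

locale metrised_graph =
  fixes G :: "('v, 'e) rmg"
  assumes rm_graph: "rm_graph G"
begin

abbreviation "V \<equiv> verts G"
abbreviation "E \<equiv> edges G"
abbreviation "D \<equiv> hedges G"
abbreviation "L \<equiv> len G"
abbreviation "iv \<equiv> inv G"

lemma finite_verts: "finite V" and finite_edges: "finite E" and finite_hedges: "finite D"
  and edges_hedges_disjoint: "E \<inter> D = {}"
  using rm_graph unfolding rm_graph_def by auto

lemma src_in_verts: "e \<in> E \<union> D \<Longrightarrow> src G e \<in> V"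
  using rm_graph unfolding rm_graph_def by auto

lemma inv_in_edges: "e \<in> E \<Longrightarrow> iv e \<in> E" and inv_neq: "e \<in> E \<Longrightarrow> iv e \<noteq> e"
  and inv_inv: "e \<in> E \<Longrightarrow> iv (iv e) = e"
  using rm_graph unfolding rm_graph_def by auto

lemma len_pos: "e \<in> E \<Longrightarrow> 0 < L e" and len_inv: "e \<in> E \<Longrightarrow> L (iv e) = L e"
  using rm_graph unfolding rm_graph_def by auto

lemma hedge_not_edge: "e \<in> D \<Longrightarrow> e \<notin> E"
  using edges_hedges_disjoint by auto

lemma tgt_in_verts: "e \<in> E \<Longrightarrow> tgt G e \<in> V"
  unfolding tgt_def using src_in_verts inv_in_edges by auto

lemma src_inv: "src G (iv e) = tgt G e"
  unfolding tgt_def by simp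

lemma tgt_inv: "e \<in> E \<Longrightarrow> tgt G (iv e) = src G e"
  unfolding tgt_def using inv_inv by simp

lemma sum_edges_inv: "(\<Sum>e\<in>E. f (iv e)) = (\<Sum>e\<in>E. f e)"
proof -
  have "bij_betw iv E E"
    by (rule bij_betw_byWitness[where f' = iv]) (auto simp: inv_in_edges inv_inv)
  then show ?thesis by (rule sum.reindex_bij_betw)
qed

lemma sum_out_edges_split:
  "(\<Sum>e\<in>{e \<in> E \<union> D. src G e = v}. f e)
     = (\<Sum>e\<in>{e \<in> E. src G e = v}. f e) + (\<Sum>e\<in>{e \<in> D. src G e = v}. f e)"
proof -
  have "{e \<in> E \<union> D. src G e = v} = {e \<in> E. src G e = v} \<union> {e \<in> D. src G e = v}" by auto
  thus ?thesis using finite_edges finite_hedges edges_hedges_disjoint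
    by (simp add: sum.union_disjoint disjoint_iff)
qed

lemma sum_verts_out_edges:
  assumes "S \<subseteq> E \<union> D"
  shows "(\<Sum>v\<in>V. \<Sum>e\<in>{e \<in> S. src G e = v}. f e) = (\<Sum>e\<in>S. f e)"
  using assms finite_edges finite_hedges finite_verts src_in_verts
  by (intro sum.group) (auto intro: finite_subset)

lemma edge_leaving:
  assumes "(a, b) \<in> {(src G e, tgt G e) | e. e \<in> E}\<^sup>*" "a \<in> S" "b \<notin> S"
  shows "\<exists>e\<in>E. src G e \<in> S \<and> tgt G e \<notin> S"
  using assms
proof (induction rule: rtrancl_induct)
  case (step y z)
  then show ?case by (cases "y \<in> S") auto
qed simp

definition conductance :: "'v \<Rightarrow> 'v \<Rightarrow> rat" where
  "conductance u u' = (\<Sum>e\<in>{e \<in> E. src G e = u \<and> tgt G e = u'}. 1 / L e)"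

lemma conductance_sym: "conductance u u' = conductance u' u"
proof -
  have "bij_betw iv {e \<in> E. src G e = u' \<and> tgt G e = u} {e \<in> E. src G e = u \<and> tgt G e = u'}"
    by (rule bij_betw_byWitness[where f' = iv]) (auto simp: inv_in_edges inv_inv src_inv tgt_inv)
  from sum.reindex_bij_betw[OF this, of "\<lambda>e. 1 / L e"]
  show ?thesis unfolding conductance_def by (simp add: len_inv)
qed

lemma conductance_nonneg: "0 \<le> conductance u u'"
  unfolding conductance_def using len_pos by (intro sum_nonneg) (simp add: less_imp_le)

lemma weights_connected_conductance: "weights_connected V conductance"
  unfolding weights_connected_def
proof (intro allI impI)
  fix S assume S: "S \<subseteq> V" "S \<noteq> {}" "S \<noteq> V"
  obtain a b where ab: "a \<in> S" "b \<in> V - S" using S by auto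
  have "(a, b) \<in> {(src G e, tgt G e) | e. e \<in> E}\<^sup>*"
    using rm_graph ab S unfolding rm_graph_def by auto
  then obtain e where e: "e \<in> E" "src G e \<in> S" "tgt G e \<notin> S" using edge_leaving ab by blast
  have "1 / L e \<le> conductance (src G e) (tgt G e)" unfolding conductance_def
    using finite_edges e len_pos by (intro member_le_sum) (auto simp: less_imp_le)
  moreover have "0 < 1 / L e" using len_pos e by simp
  ultimately have "0 < conductance (src G e) (tgt G e)" by linarith
  thus "\<exists>u\<in>S. \<exists>u'\<in>V - S. 0 < conductance u u'" using e tgt_in_verts by blast
qed

lemma vertex_laplacian_solvable:
  assumes "(\<Sum>v\<in>V. r v) = 0"
  obtains \<phi> where "\<And>v. v \<in> V \<Longrightarrow> (\<Sum>e\<in>{e \<in> E. src G e = v}. (\<phi> v - \<phi> (tgt G e)) / L e) = r v"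
proof -
  obtain \<phi> where \<phi>: "\<forall>v\<in>V. (\<Sum>u\<in>V. conductance v u * (\<phi> v - \<phi> u)) = r v"
    using weighted_laplacian_solvable[OF finite_verts conductance_sym conductance_nonneg
        weights_connected_conductance assms] by blast
  have "(\<Sum>e\<in>{e \<in> E. src G e = v}. (\<phi> v - \<phi> (tgt G e)) / L e)
      = (\<Sum>u\<in>V. conductance v u * (\<phi> v - \<phi> u))" if "v \<in> V" for v
  proof -
    have "(\<Sum>e\<in>{e \<in> E. src G e = v}. (\<phi> v - \<phi> (tgt G e)) / L e)
        = (\<Sum>u\<in>V. \<Sum>e\<in>{e \<in> {e \<in> E. src G e = v}. tgt G e = u}. (\<phi> v - \<phi> (tgt G e)) / L e)"
      using finite_verts finite_edges tgt_in_verts by (intro sum.group[symmetric]) auto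
    also have "\<dots> = (\<Sum>u\<in>V. conductance v u * (\<phi> v - \<phi> u))"
      unfolding conductance_def by (intro sum.cong refl) (auto simp: sum_distrib_right intro!: sum.cong)
    finally show ?thesis .
  qed
  with \<phi> show ?thesis by (intro that) simp
qed

text \<open>The solution of -q'' = dens mu e on the edge e with q(0) = q(len e) = 0.\<close>
definition dirichlet_poly :: "('v, 'e) meas \<Rightarrow> 'e \<Rightarrow> rat poly" where
  "dirichlet_poly \<mu> e = (let Q = - antideriv (antideriv (dens \<mu> e))
     in Q - smult (poly Q (L e) / L e) [:0, 1:])"

lemma pderiv2_dirichlet_poly: "pderiv (pderiv (dirichlet_poly \<mu> e)) = - dens \<mu> e"
  unfolding dirichlet_poly_def Let_def
  by (simp add: pderiv_diff pderiv_minus pderiv_antideriv pderiv_smult pderiv_pCons)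

lemma poly_dirichlet_poly_0 [simp]: "poly (dirichlet_poly \<mu> e) 0 = 0"
  unfolding dirichlet_poly_def Let_def by simp

lemma poly_dirichlet_poly_len: "e \<in> E \<Longrightarrow> poly (dirichlet_poly \<mu> e) (L e) = 0"
  unfolding dirichlet_poly_def Let_def using len_pos[of e] by simp

lemma dirichlet_poly_inv:
  assumes "is_meas G \<mu>" "e \<in> E"
  shows "dirichlet_poly \<mu> (iv e) = pcompose (dirichlet_poly \<mu> e) [:L e, -1:]"
proof -
  define r where "r = dirichlet_poly \<mu> (iv e) - pcompose (dirichlet_poly \<mu> e) [:L e, -1:]"
  have "pderiv (pderiv r) = 0"
    unfolding r_def using assms
    by (simp add: pderiv_diff pderiv_add pderiv_pcompose_reflect pderiv_minus pderiv2_dirichlet_poly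
        pcompose_uminus is_meas_def)
  moreover have "poly r 0 = 0" "poly r (L e) = 0"
    unfolding r_def using assms(2) poly_dirichlet_poly_len[of "iv e"] poly_dirichlet_poly_len[of e]
    by (simp_all add: inv_in_edges len_inv)
  ultimately have "r = 0" using len_pos[OF assms(2)] by (simp add: affine_poly_eq_0_if_two_zeros)
  thus ?thesis unfolding r_def by simp
qed

text \<open>Each unoriented edge contributes its mass once through the outgoing slope of
  either orientation.\<close>
lemma edge_mass_eq_sum_slopes:
  assumes "is_meas G \<mu>"
  shows "(\<Sum>e\<in>E. polyint (dens \<mu> e) 0 (L e)) / 2 = (\<Sum>e\<in>E. poly (pderiv (dirichlet_poly \<mu> e)) 0)"
proof -
  let ?q = "dirichlet_poly \<mu>"
  have mass: "polyint (dens \<mu> e) 0 (L e) = poly (pderiv (?q e)) 0 - poly (pderiv (?q e)) (L e)" for e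
    using polyint_eq_poly_diff[of "- pderiv (?q e)"] by (simp add: pderiv_minus pderiv2_dirichlet_poly)
  have "(\<Sum>e\<in>E. poly (pderiv (?q e)) 0) = (\<Sum>e\<in>E. poly (pderiv (?q (iv e))) 0)"
    using sum_edges_inv[of "\<lambda>e. poly (pderiv (?q e)) 0"] by simp
  also have "\<dots> = - (\<Sum>e\<in>E. poly (pderiv (?q e)) (L e))"
    using assms by (simp add: dirichlet_poly_inv pderiv_pcompose_reflect sum_negf cong: sum.cong)
  finally show ?thesis by (simp add: mass sum_subtractf)
qed

text \<open>g is a preimage of mu under the Laplacian, the polynomial GP e describing g
  on the edge or half-edge e.\<close>
definition is_potential :: "('v, 'e) meas \<Rightarrow> (('v, 'e) pt \<Rightarrow> rat) \<Rightarrow> ('e \<Rightarrow> rat poly) \<Rightarrow> bool" where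
  "is_potential \<mu> g GP \<longleftrightarrow>
    (\<forall>e\<in>E. \<forall>s. 0 \<le> s \<and> s \<le> L e \<longrightarrow> g (Ep e s) = poly (GP e) s) \<and>
    (\<forall>d\<in>D. \<forall>s. 0 \<le> s \<longrightarrow> g (Ep d s) = poly (GP d) s) \<and>
    (\<forall>e\<in>E \<union> D. poly (GP e) 0 = g (Vx (src G e))) \<and>
    (\<forall>e\<in>E. GP (iv e) = pcompose (GP e) [:L e, -1:]) \<and>
    (\<forall>e\<in>E. - pderiv (pderiv (GP e)) = dens \<mu> e) \<and>
    (\<forall>d\<in>D. pderiv (pderiv (GP d)) = 0 \<and> poly (pderiv (GP d)) 0 = hm \<mu> d) \<and>
    (\<forall>v\<in>V. vm \<mu> v = - (\<Sum>e\<in>{e \<in> E \<union> D. src G e = v}. poly (pderiv (GP e)) 0))"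

lemma is_potentialD:
  assumes "is_potential \<mu> g GP"
  shows potential_edge: "\<And>e s. e \<in> E \<Longrightarrow> 0 \<le> s \<Longrightarrow> s \<le> L e \<Longrightarrow> g (Ep e s) = poly (GP e) s"
    and potential_hedge: "\<And>d s. d \<in> D \<Longrightarrow> 0 \<le> s \<Longrightarrow> g (Ep d s) = poly (GP d) s"
    and potential_src: "\<And>e. e \<in> E \<union> D \<Longrightarrow> poly (GP e) 0 = g (Vx (src G e))"
    and potential_inv: "\<And>e. e \<in> E \<Longrightarrow> GP (iv e) = pcompose (GP e) [:L e, -1:]"
    and potential_dens: "\<And>e. e \<in> E \<Longrightarrow> - pderiv (pderiv (GP e)) = dens \<mu> e"
    and potential_hedge_affine: "\<And>d. d \<in> D \<Longrightarrow> pderiv (pderiv (GP d)) = 0"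
    and potential_hedge_slope: "\<And>d. d \<in> D \<Longrightarrow> poly (pderiv (GP d)) 0 = hm \<mu> d"
    and potential_vertex_mass: "\<And>v. v \<in> V \<Longrightarrow>
          vm \<mu> v = - (\<Sum>e\<in>{e \<in> E \<union> D. src G e = v}. poly (pderiv (GP e)) 0)"
  using assms unfolding is_potential_def by blast+

lemma potential_Ep_0:
  assumes "is_potential \<mu> g GP" "e \<in> E \<union> D"
  shows "g (Ep e 0) = g (Vx (src G e))"
  using assms potential_edge[OF assms(1), of e 0] potential_hedge[OF assms(1), of e 0]
    potential_src[OF assms] len_pos[of e] by (auto simp: less_imp_le)

lemma potential_Ep_inv:
  assumes "is_potential \<mu> g GP" "e \<in> E" "0 \<le> s" "s \<le> L e"
  shows "g (Ep (iv e) (L e - s)) = g (Ep e s)"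
  using assms potential_edge[OF assms(1)] potential_inv[OF assms(1,2)]
  by (simp add: inv_in_edges len_inv)

text \<open>On each edge the potential is the Dirichlet solution plus the linear interpolation
  of vertex values phi; phi solves the discrete Laplace equation making the
  outgoing slopes at every vertex match the point mass there.\<close>
lemma potential_exists:
  assumes meas: "is_meas G \<mu>" and total: "total_mass G \<mu> = 0"
  obtains g GP where "is_potential \<mu> g GP"
proof -
  let ?q = "dirichlet_poly \<mu>"
  define r where "r v = vm \<mu> v + (\<Sum>e\<in>{e \<in> D. src G e = v}. hm \<mu> e)
      + (\<Sum>e\<in>{e \<in> E. src G e = v}. poly (pderiv (?q e)) 0)" for v
  have "(\<Sum>v\<in>V. r v) = (\<Sum>v\<in>V. vm \<mu> v) + (\<Sum>e\<in>D. hm \<mu> e) + (\<Sum>e\<in>E. poly (pderiv (?q e)) 0)"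
    unfolding r_def by (simp add: sum.distrib sum_verts_out_edges)
  also have "\<dots> = 0"
    using total unfolding total_mass_def edge_mass_eq_sum_slopes[OF meas] by simp
  finally obtain \<phi> where
    \<phi>: "\<And>v. v \<in> V \<Longrightarrow> (\<Sum>e\<in>{e \<in> E. src G e = v}. (\<phi> v - \<phi> (tgt G e)) / L e) = r v"
    using vertex_laplacian_solvable by blast
  define GP where "GP e = (if e \<in> E then ?q e + [:\<phi> (src G e), (\<phi> (tgt G e) - \<phi> (src G e)) / L e:]
      else [:\<phi> (src G e), hm \<mu> e:])" for e
  define g where "g x = (case x of Vx v \<Rightarrow> \<phi> v | Ep e s \<Rightarrow> poly (GP e) s)" for x
  have GP_inv: "GP (iv e) = pcompose (GP e) [:L e, -1:]" if e: "e \<in> E" for e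
  proof -
    have "\<phi> (src G e) + (\<phi> (tgt G e) - \<phi> (src G e)) / L e * (L e - x)
        = \<phi> (tgt G e) + (\<phi> (src G e) - \<phi> (tgt G e)) / L e * x" for x
      using len_pos[OF e] by (simp add: field_simps)
    then have "poly (GP (iv e)) x = poly (pcompose (GP e) [:L e, -1:]) x" for x
      unfolding GP_def using e inv_in_edges[OF e] len_inv[OF e] src_inv tgt_inv[OF e]
      by (simp add: dirichlet_poly_inv[OF meas e] algebra_simps)
    thus ?thesis using poly_eq_poly_eq_iff by blast
  qed
  have vertex_slopes: "vm \<mu> v = - (\<Sum>e\<in>{e \<in> E \<union> D. src G e = v}. poly (pderiv (GP e)) 0)"
    if v: "v \<in> V" for v
  proof -
    have "(\<Sum>e\<in>{e \<in> E \<union> D. src G e = v}. poly (pderiv (GP e)) 0)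
      = (\<Sum>e\<in>{e \<in> E. src G e = v}. poly (pderiv (?q e)) 0 - (\<phi> v - \<phi> (tgt G e)) / L e)
        + (\<Sum>e\<in>{e \<in> D. src G e = v}. hm \<mu> e)"
      unfolding sum_out_edges_split GP_def using edges_hedges_disjoint
      by (intro arg_cong2[where f = "(+)"] sum.cong refl)
        (auto simp: pderiv_add pderiv_pCons diff_divide_distrib)
    also have "\<dots> = - vm \<mu> v" using \<phi>[OF v] unfolding r_def by (simp add: sum_subtractf)
    finally show ?thesis by simp
  qed
  have "is_potential \<mu> g GP"
    unfolding is_potential_def using GP_inv vertex_slopes hedge_not_edge
    by (auto simp: g_def GP_def pderiv_add pderiv_pCons pderiv2_dirichlet_poly)
  then show ?thesis by (rule that)
qed

lemma cpt_cases:
  assumes "valid_pt G x"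
  obtains (V) v where "v \<in> V" "cpt G x = Vx v"
  | (E) e t where "e \<in> E" "0 < t" "t < L e" "cpt G x = Ep e t"
  | (D) d t where "d \<in> D" "0 < t" "cpt G x = Ep d t"
proof (cases x)
  case (Vx v)
  then show ?thesis using assms that(1) by simp
next
  case (Ep e t)
  show ?thesis
  proof (cases "t = 0")
    case True
    then show ?thesis using assms Ep that(1) src_in_verts by auto
  next
    case t0: False
    show ?thesis
    proof (cases "e \<in> E \<and> t = L e")
      case True
      then show ?thesis using assms Ep that(1) tgt_in_verts t0 by auto
    next
      case False
      then show ?thesis using assms Ep that(2,3) t0 hedge_not_edge by (auto simp: order_le_less)
    qed
  qed
qed

lemma same_pt_sym: "same_pt G p q \<longleftrightarrow> same_pt G q p"
proof -
  have *: "same_pt G q p" if "same_pt G p q" for p q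
  proof -
    from that consider "cpt G p = cpt G q" | e t where "e \<in> E" "0 < t" "t < L e" "cpt G p = Ep e t"
      "cpt G q = Ep (iv e) (L e - t)" unfolding same_pt_def by blast
    then show ?thesis
    proof cases
      case 1 then show ?thesis unfolding same_pt_def by simp
    next
      case (2 e t)
      have "iv e \<in> E" "0 < L (iv e) - (L e - t)" "L e - t < L (iv e)" "cpt G q = Ep (iv e) (L e - t)"
        "cpt G p = Ep (iv (iv e)) (L (iv e) - (L e - t))"
        using 2 inv_in_edges len_inv inv_inv by auto
      then show ?thesis unfolding same_pt_def using 2 by force
    qed
  qed
  show ?thesis using *[of p q] *[of q p] by blast
qed

lemma same_pt_Vx_iff: "same_pt G x (Vx v) \<longleftrightarrow> cpt G x = Vx v"
  unfolding same_pt_def by auto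

lemma same_pt_edge_iff:
  assumes "e \<in> E" "0 < c" "c < L e"
  shows "same_pt G x (Ep e c) \<longleftrightarrow> cpt G x = Ep e c \<or> cpt G x = Ep (iv e) (L e - c)"
proof
  assume "same_pt G x (Ep e c)"
  hence "same_pt G (Ep e c) x" using same_pt_sym by blast
  thus "cpt G x = Ep e c \<or> cpt G x = Ep (iv e) (L e - c)" unfolding same_pt_def using assms by auto
next
  assume "cpt G x = Ep e c \<or> cpt G x = Ep (iv e) (L e - c)"
  hence "same_pt G (Ep e c) x" unfolding same_pt_def using assms by auto
  thus "same_pt G x (Ep e c)" using same_pt_sym by blast
qed

lemma same_pt_hedge_iff:
  assumes "d \<in> D" "0 < c"
  shows "same_pt G x (Ep d c) \<longleftrightarrow> cpt G x = Ep d c"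
proof
  assume "same_pt G x (Ep d c)"
  hence "same_pt G (Ep d c) x" using same_pt_sym by blast
  thus "cpt G x = Ep d c" unfolding same_pt_def using assms hedge_not_edge by auto
next
  assume "cpt G x = Ep d c"
  hence "same_pt G (Ep d c) x" unfolding same_pt_def using assms hedge_not_edge by auto
  thus "same_pt G x (Ep d c)" using same_pt_sym by blast
qed

lemma cuts_edge: "e \<in> E \<Longrightarrow> cuts G P e = {c. 0 < c \<and> c < L e \<and> (\<exists>p\<in>P. cpt G p = Ep e c \<or> cpt G p = Ep (iv e) (L e - c))}"
  unfolding cuts_def using same_pt_edge_iff same_pt_sym by auto

lemma cuts_hedge: "d \<in> D \<Longrightarrow> cuts G P d = {c. 0 < c \<and> (\<exists>p\<in>P. cpt G p = Ep d c)}"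
  unfolding cuts_def using same_pt_hedge_iff same_pt_sym hedge_not_edge by auto

lemma finite_cuts:
  assumes "finite P" "e \<in> E \<union> D"
  shows "finite (cuts G P e)"
proof -
  have "cuts G P e \<subseteq> (\<Union>p\<in>P. {c. cpt G p = Ep e c} \<union> {c. cpt G p = Ep (iv e) (L e - c)})"
    using assms(2) by (auto simp: cuts_edge cuts_hedge)
  moreover have "finite {c. cpt G p = Ep e c}" for p
    by (rule finite_subset[of _ "{THE c. cpt G p = Ep e c}"]) auto
  moreover have "finite {c. cpt G p = Ep (iv e) (L e - c)}" for p
    by (rule finite_subset[of _ "{L e - (THE c. cpt G p = Ep (iv e) c)}"]) auto
  ultimately show ?thesis using assms(1) by (meson finite_UN_I finite_Un finite_subset)
qed

lemma cuts_edge_bounds: "e \<in> E \<Longrightarrow> c \<in> cuts G P e \<Longrightarrow> 0 < c \<and> c < L e"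
  unfolding cuts_def by auto

lemma cuts_pos: "c \<in> cuts G P e \<Longrightarrow> 0 < c"
  unfolding cuts_def by auto

lemma ecuts_props:
  assumes "finite P" "e \<in> E"
  shows "finite (ecuts G P e)" "ecuts G P e \<noteq> {}" "Min (ecuts G P e) = 0" "Max (ecuts G P e) = L e"
    "ecuts G P e - {0} = insert (L e) (cuts G P e)" "L e \<notin> cuts G P e"
proof -
  show f: "finite (ecuts G P e)" unfolding ecuts_def using finite_cuts[OF assms(1)] assms(2) by simp
  show "ecuts G P e \<noteq> {}" unfolding ecuts_def by simp
  have r: "\<And>c. c \<in> ecuts G P e \<Longrightarrow> 0 \<le> c \<and> c \<le> L e"
    unfolding ecuts_def using cuts_edge_bounds[OF assms(2)] len_pos[OF assms(2)] by force
  show "Min (ecuts G P e) = 0" using f r by (intro Min_eqI) (auto simp: ecuts_def)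
  show "Max (ecuts G P e) = L e" using f r by (intro Max_eqI) (auto simp: ecuts_def)
  show "L e \<notin> cuts G P e" using cuts_edge_bounds[OF assms(2)] by blast
  show "ecuts G P e - {0} = insert (L e) (cuts G P e)"
    unfolding ecuts_def using cuts_edge_bounds[OF assms(2)] len_pos[OF assms(2)] by force
qed

lemma hedge_cuts_props:
  assumes "finite P" "d \<in> D"
  shows "finite ({0} \<union> cuts G P d)" "Min ({0} \<union> cuts G P d) = 0" "Max ({0} \<union> cuts G P d) = tailst G P d"
    "({0} \<union> cuts G P d) - {0} = cuts G P d" "0 \<le> tailst G P d"
proof -
  show f: "finite ({0} \<union> cuts G P d)" using finite_cuts[OF assms(1)] assms(2) by simp
  show "Min ({0} \<union> cuts G P d) = 0" using f cuts_pos[of _ P d] by (intro Min_eqI) (auto simp: less_imp_le)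
  show "Max ({0} \<union> cuts G P d) = tailst G P d" unfolding tailst_def by simp
  show "({0} \<union> cuts G P d) - {0} = cuts G P d" using cuts_pos[of _ P d] by force
  show "0 \<le> tailst G P d" unfolding tailst_def using f by (intro Max_ge) auto
qed

lemma ecuts_bounds: "e \<in> E \<Longrightarrow> c \<in> ecuts G P e \<Longrightarrow> 0 \<le> c \<and> c \<le> L e"
  unfolding ecuts_def using cuts_edge_bounds[of e c P] len_pos[of e] by (auto simp: less_imp_le)

lemma cut_le_tailst: "finite P \<Longrightarrow> d \<in> D \<Longrightarrow> c \<in> cuts G P d \<Longrightarrow> c \<le> tailst G P d"
  unfolding tailst_def using finite_cuts[of P d] by (intro Max_ge) auto

lemma potential_cpt:
  assumes pot: "is_potential \<mu> g GP" and x: "valid_pt G x"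
  shows "g (cpt G x) = g x"
proof (cases x)
  case (Ep e t)
  then have e: "e \<in> E \<union> D" "0 \<le> t" using x by auto
  consider "t = 0" | "t \<noteq> 0" "e \<in> E" "t = L e" | "t \<noteq> 0" "\<not> (e \<in> E \<and> t = L e)" by blast
  then show ?thesis
  proof cases
    case 1
    then show ?thesis using Ep potential_Ep_0[OF pot e(1)] by simp
  next
    case 2
    then have "g (Ep e t) = g (Ep (iv e) 0)"
      using potential_Ep_inv[OF pot, of e t] len_pos[of e] by (simp add: less_imp_le)
    also have "\<dots> = g (Vx (tgt G e))" using potential_Ep_0[OF pot] 2 inv_in_edges src_inv by simp
    finally show ?thesis using Ep 2 by simp
  qed (use Ep in auto)
qed simp

text \<open>If cpt p lies inside the edge e0 at distance t0 from its source, then in_interior p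
  holds for e0 and its reverse, position p e is the distance of p from the source of e, and
  src_share p e is the barycentric weight (L e0 - t0) / L e0 of the source of e0 (1 for the
  source of a half-edge).\<close>
definition in_interior :: "('v, 'e) pt \<Rightarrow> 'e \<Rightarrow> bool" where
  "in_interior p e = (case cpt G p of Vx _ \<Rightarrow> False | Ep e0 t0 \<Rightarrow> e = e0 \<or> (e0 \<in> E \<and> e = iv e0))"

definition position :: "('v, 'e) pt \<Rightarrow> 'e \<Rightarrow> rat" where
  "position p e = (case cpt G p of Vx _ \<Rightarrow> 0 | Ep e0 t0 \<Rightarrow> if e = e0 then t0 else L e0 - t0)"

definition src_share :: "('v, 'e) pt \<Rightarrow> 'e \<Rightarrow> rat" where
  "src_share p e = (case cpt G p of Vx _ \<Rightarrow> 0 | Ep e0 t0 \<Rightarrow>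
     if e0 \<in> E then (if e = e0 then (L e0 - t0) / L e0 else if e = iv e0 then t0 / L e0 else 0)
     else (if e = e0 then 1 else 0))"

definition kink :: "('v, 'e) pt \<Rightarrow> 'e \<Rightarrow> rat" where
  "kink p e = (if in_interior p e then 1 else 0)"

lemma position_pos:
  assumes "valid_pt G p" and "in_interior p e"
  shows "0 < position p e"
  using assms(1)
proof (cases rule: cpt_cases)
  case (E e0 t0)
  then show ?thesis using assms(2) inv_neq[of e0] by (auto simp: in_interior_def position_def)
qed (use assms(2) hedge_not_edge in \<open>auto simp: in_interior_def position_def\<close>)

lemma position_in_cuts:
  assumes p: "valid_pt G p" and h: "in_interior p e" and pP: "p \<in> P"
  shows "position p e \<in> cuts G P e"
  using p
proof (cases rule: cpt_cases)
  case (V v)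
  then show ?thesis using h by (auto simp: in_interior_def)
next
  case (E e0 t0)
  show ?thesis
  proof (cases "e = e0")
    case True
    then show ?thesis using E pP by (auto simp: position_def cuts_edge)
  next
    case False
    hence "e = iv e0" using h E by (auto simp: in_interior_def)
    then show ?thesis using E pP inv_in_edges inv_inv inv_neq len_inv by (auto simp: position_def cuts_edge)
  qed
next
  case (D d0 t0)
  hence "e = d0" using h hedge_not_edge by (auto simp: in_interior_def)
  then show ?thesis using D pP by (auto simp: position_def cuts_hedge)
qed

lemma dlt_Ep_interior:
  assumes p: "valid_pt G p" and e: "e \<in> E \<union> D" and t: "0 < t" "e \<in> E \<longrightarrow> t < L e"
  shows "dlt G p (Ep e t) = (if in_interior p e \<and> position p e = t then 1 else 0)"
proof -
  have same: "same_pt G p (Ep e t) \<longleftrightarrow> cpt G p = Ep e t \<or> (e \<in> E \<and> cpt G p = Ep (iv e) (L e - t))"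
    using same_pt_edge_iff[of e t p] same_pt_hedge_iff[of e t p] e t by auto
  from p show ?thesis
  proof (cases rule: cpt_cases)
    case (E e0 t0)
    then show ?thesis
      unfolding dlt_def same using e inv_neq[of e0] inv_inv len_inv inv_in_edges[of e0] hedge_not_edge
      by (auto simp: in_interior_def position_def)
  qed (use e hedge_not_edge inv_in_edges in \<open>auto simp: dlt_def same in_interior_def position_def\<close>)
qed

lemma src_share_hedge:
  assumes p: "valid_pt G p" and d: "d \<in> D"
  shows "src_share p d = kink p d"
  using p
proof (cases rule: cpt_cases)
  case (V v)
  then show ?thesis by (simp add: kink_def in_interior_def src_share_def)
next
  case (E e0 t0)
  have "d \<noteq> e0" "d \<noteq> iv e0" using E d inv_in_edges hedge_not_edge by auto
  then show ?thesis using E by (simp add: kink_def in_interior_def src_share_def)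
next
  case (D d0 t0)
  then show ?thesis using hedge_not_edge by (simp add: kink_def in_interior_def src_share_def)
qed

lemma src_share_ramp_inv:
  assumes p: "valid_pt G p" and e: "e \<in> E" and t: "0 \<le> t" "t \<le> L e"
  shows "src_share p e * t - kink p e * max 0 (t - position p e)
    = src_share p (iv e) * (L e - t) - kink p (iv e) * max 0 (L e - t - position p (iv e))"
  using p
proof (cases rule: cpt_cases)
  case (V v)
  then show ?thesis by (simp add: kink_def in_interior_def src_share_def position_def)
next
  case (E e0 t0)
  have Lp: "L e0 > 0" using len_pos E by simp
  show ?thesis
  proof (cases "e = e0")
    case True
    have ne: "iv e0 \<noteq> e0" using inv_neq E by simp
    have "(L e0 - t0) / L e0 * t - max 0 (t - t0) = t0 / L e0 * (L e0 - t) - max 0 (L e0 - t - (L e0 - t0))"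
      using Lp by (auto simp: max_def field_simps)
    then show ?thesis using E True ne by (simp add: kink_def in_interior_def src_share_def position_def)
  next
    case False
    show ?thesis
    proof (cases "e = iv e0")
      case True2: True
      have ie: "iv e = e0" using True2 E inv_inv by simp
      have Le: "L e = L e0" using True2 E len_inv by simp
      have "t0 / L e0 * t - max 0 (t - (L e0 - t0)) = (L e0 - t0) / L e0 * (L e0 - t) - max 0 (L e0 - t - t0)"
        using Lp by (auto simp: max_def field_simps)
      then show ?thesis using E True2 False ie Le by (simp add: kink_def in_interior_def src_share_def position_def)
    next
      case False2: False
      have "iv e \<noteq> e0" "iv e \<noteq> iv e0" using False False2 E e inv_inv by metis+
      then show ?thesis using E False False2 by (simp add: kink_def in_interior_def src_share_def position_def)
    qed
  qed
next
  case (D d0 t0)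
  have "e \<noteq> d0" "iv e \<noteq> d0" using D e inv_in_edges hedge_not_edge by auto
  then show ?thesis using D hedge_not_edge by (simp add: kink_def in_interior_def src_share_def position_def)
qed

lemma point_total_mass:
  assumes p: "valid_pt G p"
  shows "(\<Sum>v\<in>V. dlt G p (Vx v)) + (\<Sum>e\<in>E \<union> D. src_share p e) = 1"
proof -
  have dV: "\<And>v. dlt G p (Vx v) = (if cpt G p = Vx v then 1 else 0)"
    unfolding dlt_def using same_pt_Vx_iff by auto
  from p show ?thesis
  proof (cases rule: cpt_cases)
    case (V v0)
    have "(\<Sum>v\<in>V. dlt G p (Vx v)) = (\<Sum>v\<in>V. if v = v0 then 1 else 0)"
      using V by (intro sum.cong refl) (auto simp: dV)
    also have "\<dots> = 1" using V finite_verts by simp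
    finally show ?thesis using V by (simp add: src_share_def)
  next
    case (E e0 t0)
    have "(\<Sum>v\<in>V. dlt G p (Vx v)) = 0" using E by (intro sum.neutral) (auto simp: dV)
    moreover have "(\<Sum>e\<in>E \<union> D. src_share p e) = (\<Sum>e\<in>E \<union> D. (if e = e0 then (L e0 - t0) / L e0 else 0) + (if e = iv e0 then t0 / L e0 else 0))"
      using E inv_neq[OF E(1)] by (intro sum.cong refl) (auto simp: src_share_def)
    moreover have "\<dots> = (L e0 - t0) / L e0 + t0 / L e0"
      using E inv_in_edges finite_edges finite_hedges by (simp add: sum.distrib)
    moreover have "(L e0 - t0) / L e0 + t0 / L e0 = 1" using len_pos[of e0] E by (simp add: field_simps)
    ultimately show ?thesis by simp
  next
    case (D d0 t0)
    have "(\<Sum>v\<in>V. dlt G p (Vx v)) = 0" using D by (intro sum.neutral) (auto simp: dV)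
    moreover have "(\<Sum>e\<in>E \<union> D. src_share p e) = (\<Sum>e\<in>E \<union> D. if e = d0 then 1 else 0)"
      using D hedge_not_edge by (intro sum.cong refl) (auto simp: src_share_def)
    moreover have "\<dots> = 1" using D finite_edges finite_hedges by simp
    ultimately show ?thesis by simp
  qed
qed

lemma potential_at_position:
  assumes pot: "is_potential \<mu> g GP" and x: "valid_pt G x" and "in_interior x e"
  shows "g (Ep e (position x e)) = g x"
  using x
proof (cases rule: cpt_cases)
  case (E e0 t0)
  then have "g (Ep e (position x e)) = g (Ep e0 t0)"
    using assms(3) potential_Ep_inv[OF pot, of e0 t0]
    by (auto simp: in_interior_def position_def)
  then show ?thesis using potential_cpt[OF pot x] E by simp
next
  case (D d0 t0)
  then show ?thesis using assms(3) potential_cpt[OF pot x] hedge_not_edge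
    by (auto simp: in_interior_def position_def)
qed (use assms(3) in \<open>simp add: in_interior_def\<close>)

lemma sum_cuts_dlt:
  assumes x: "valid_pt G x" "x \<in> P" "finite P" and e: "e \<in> E \<union> D"
  shows "(\<Sum>c\<in>cuts G P e. dlt G x (Ep e c) * h c)
    = (if in_interior x e then h (position x e) else 0)"
proof -
  have "(\<Sum>c\<in>cuts G P e. dlt G x (Ep e c) * h c)
      = (\<Sum>c\<in>cuts G P e. if position x e = c then (if in_interior x e then h c else 0) else 0)"
    using dlt_Ep_interior[OF x(1) e] cuts_pos cuts_edge_bounds by (intro sum.cong refl) auto
  also have "\<dots> = (if in_interior x e then h (position x e) else 0)"
    using position_in_cuts[OF x(1) _ x(2)] finite_cuts[OF x(3) e] by (simp add: sum.delta)
  finally show ?thesis .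
qed

text \<open>A point inside an edge is seen from both orientations, whence the factor 1/2.\<close>
lemma interior_count:
  assumes "valid_pt G x"
  shows "(\<Sum>v\<in>V. dlt G x (Vx v)) + of_nat (card {e \<in> E. in_interior x e}) / 2
    + of_nat (card {d \<in> D. in_interior x d}) = 1"
proof -
  have dlt_Vx: "dlt G x (Vx v) = (if cpt G x = Vx v then 1 else 0)" for v
    unfolding dlt_def using same_pt_Vx_iff by auto
  from assms show ?thesis
  proof (cases rule: cpt_cases)
    case (V v0)
    then show ?thesis using finite_verts by (simp add: dlt_Vx in_interior_def)
  next
    case (E e0 t0)
    then have on: "{e \<in> E. in_interior x e} = {e0, iv e0}" "{d \<in> D. in_interior x d} = {}"
      using inv_in_edges hedge_not_edge by (auto simp: in_interior_def)
    then show ?thesis unfolding on using E inv_neq[of e0] by (simp add: dlt_Vx)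
  next
    case (D d0 t0)
    then have on: "{e \<in> E. in_interior x e} = {}" "{d \<in> D. in_interior x d} = {d0}"
      using hedge_not_edge by (auto simp: in_interior_def)
    then show ?thesis unfolding on using D by (simp add: dlt_Vx)
  qed
qed

definition delta_integral :: "('v, 'e) pt set \<Rightarrow> ('v, 'e) pt \<Rightarrow> (('v, 'e) pt \<Rightarrow> rat) \<Rightarrow> rat" where
  "delta_integral P x h = (\<Sum>e\<in>E. \<Sum>c\<in>cuts G P e. dlt G x (Ep e c) * h (Ep e c)) / 2
       + (\<Sum>d\<in>D. \<Sum>c\<in>cuts G P d. dlt G x (Ep d c) * h (Ep d c))
       + (\<Sum>v\<in>V. dlt G x (Vx v) * h (Vx v))"

lemma delta_integral_potential:
  assumes pot: "is_potential \<mu> g GP" and x: "valid_pt G x" "x \<in> P" "finite P"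
  shows "delta_integral P x g = g x"
proof -
  have on_cuts: "(\<Sum>c\<in>cuts G P e. dlt G x (Ep e c) * g (Ep e c)) = (if in_interior x e then g x else 0)"
    if "e \<in> E \<union> D" for e
    using sum_cuts_dlt[OF x that] potential_at_position[OF pot x(1)] by simp
  have at_verts: "dlt G x (Vx v) * g (Vx v) = dlt G x (Vx v) * g x" for v
    using potential_cpt[OF pot x(1)] same_pt_Vx_iff by (auto simp: dlt_def)
  have "(\<Sum>e\<in>E. \<Sum>c\<in>cuts G P e. dlt G x (Ep e c) * g (Ep e c))
      = of_nat (card {e \<in> E. in_interior x e}) * g x"
    using on_cuts finite_edges by (simp add: sum.inter_filter[symmetric])
  moreover have "(\<Sum>d\<in>D. \<Sum>c\<in>cuts G P d. dlt G x (Ep d c) * g (Ep d c))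
      = of_nat (card {d \<in> D. in_interior x d}) * g x"
    using on_cuts finite_hedges by (simp add: sum.inter_filter[symmetric])
  moreover have "(\<Sum>v\<in>V. dlt G x (Vx v) * g (Vx v)) = (\<Sum>v\<in>V. dlt G x (Vx v)) * g x"
    by (simp add: at_verts sum_distrib_right)
  ultimately have "delta_integral P x g
     = g x * ((\<Sum>v\<in>V. dlt G x (Vx v)) + of_nat (card {e \<in> E. in_interior x e}) / 2
        + of_nat (card {d \<in> D. in_interior x d}))"
    unfolding delta_integral_def by (simp add: algebra_simps)
  then show ?thesis unfolding interior_count[OF x(1)] by simp
qed

section \<open>Green's identity on the subdivided graph\<close>

definition affine_off_cuts :: "('v, 'e) pt set \<Rightarrow> (('v, 'e) pt \<Rightarrow> rat) \<Rightarrow> bool" where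
  "affine_off_cuts P F \<longleftrightarrow>
     (\<forall>e \<in> E \<union> D. \<forall>t. 0 < t \<and> (e \<in> E \<longrightarrow> t < L e) \<and> t \<notin> cuts G P e \<longrightarrow> dd F e t = 0)"

text \<open>The boundary terms F' g - F g' of Green's formula, with the one-sided derivatives
  of F.\<close>
definition wronskian_right ::
  "(('v, 'e) pt \<Rightarrow> rat) \<Rightarrow> ('e \<Rightarrow> rat poly) \<Rightarrow> (('v, 'e) pt \<Rightarrow> rat) \<Rightarrow> 'e \<Rightarrow> rat \<Rightarrow> rat" where
  "wronskian_right F GP g e t = dplus F e t * g (Ep e t) - F (Ep e t) * poly (pderiv (GP e)) t"

definition wronskian_left ::
  "(('v, 'e) pt \<Rightarrow> rat) \<Rightarrow> ('e \<Rightarrow> rat poly) \<Rightarrow> (('v, 'e) pt \<Rightarrow> rat) \<Rightarrow> 'e \<Rightarrow> rat \<Rightarrow> rat" where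
  "wronskian_left F GP g e t = dminus F e t * g (Ep e t) - F (Ep e t) * poly (pderiv (GP e)) t"

lemma segment_germs:
  assumes "a < c" and "\<And>s. a \<le> s \<Longrightarrow> s \<le> c \<Longrightarrow> F (Ep e s) = poly p s"
  shows "piece F e a c = p" "dplus F e a = poly (pderiv p) a" "dminus F e c = poly (pderiv p) c"
  using assms by (auto intro: piece_eq dplus_eq[of "c - a"] dminus_eq[of "c - a"])

lemma segment_affine:
  assumes "a < c" and F: "\<And>s. a \<le> s \<Longrightarrow> s \<le> c \<Longrightarrow> F (Ep e s) = poly p s"
    and dd0: "\<And>t. a < t \<Longrightarrow> t < c \<Longrightarrow> dd F e t = 0"
  shows "pderiv (pderiv p) = 0"
proof -
  have "poly (pderiv (pderiv p)) t = poly 0 t" if "a + (c - a) / 3 \<le> t" "t \<le> c - (c - a) / 3" for t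
  proof -
    have t: "a < t" "t < c" using that assms(1) by (auto simp: field_simps)
    have "dd F e t = poly (pderiv (pderiv p)) t"
      by (rule dd_eq[of "min (t - a) (c - t)"]) (use t F in auto)
    thus ?thesis using dd0 t by simp
  qed
  thus ?thesis using assms(1)
    by (intro poly_eq_if_eq_on_infinite[of "{a + (c - a) / 3 .. c - (c - a) / 3}"]) (auto simp: field_simps)
qed

abbreviation break_points :: "('v, 'e) pt set \<Rightarrow> 'e \<Rightarrow> rat set" where
  "break_points P e \<equiv> (if e \<in> E then ecuts G P e else {0} \<union> cuts G P e)"

lemma segment_poly:
  assumes om: "omega_logP G P F" and aff: "affine_off_cuts P F"
    and e: "e \<in> E \<union> D" and ac: "(a, c) \<in> consec (break_points P e)"
  obtains p where "a < c" "0 \<le> a" "e \<in> E \<Longrightarrow> c \<le> L e"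
    "\<And>s. a \<le> s \<Longrightarrow> s \<le> c \<Longrightarrow> F (Ep e s) = poly p s" "pderiv (pderiv p) = 0"
proof -
  have bounds: "0 \<le> y \<and> (e \<in> E \<longrightarrow> y \<le> L e)" if "y \<in> break_points P e" for y
    using that ecuts_bounds cuts_pos[of y P e] by (cases "e \<in> E") (auto simp: less_imp_le)
  have "cuts G P e \<subseteq> break_points P e" unfolding ecuts_def by auto
  have ac': "a \<in> break_points P e" "c \<in> break_points P e" "a < c" using ac unfolding consec_def by auto
  obtain p where p: "\<And>s. a \<le> s \<Longrightarrow> s \<le> c \<Longrightarrow> F (Ep e s) = poly p s"
    using om e ac unfolding omega_logP_def by (cases "e \<in> E") fastforce+
  have "pderiv (pderiv p) = 0"
  proof (rule segment_affine[OF ac'(3) p])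
    fix t assume t: "a < t" "t < c"
    then have "t \<notin> cuts G P e"
      using ac \<open>cuts G P e \<subseteq> break_points P e\<close> unfolding consec_def by auto
    moreover have "0 < t" "e \<in> E \<longrightarrow> t < L e" using bounds[OF ac'(1)] bounds[OF ac'(2)] t by auto
    ultimately show "dd F e t = 0" using aff e unfolding affine_off_cuts_def by blast
  qed
  then show ?thesis using that p ac'(3) bounds[OF ac'(1)] bounds[OF ac'(2)] by blast
qed

lemma segment_green:
  assumes pot: "is_potential \<mu> g GP" and om: "omega_logP G P F" and aff: "affine_off_cuts P F"
    and e: "e \<in> E \<union> D" and ac: "(a, c) \<in> consec (break_points P e)"
  shows "polyint (piece F e a c * - pderiv (pderiv (GP e))) a c
    = wronskian_left F GP g e c - wronskian_right F GP g e a"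
proof -
  obtain p where p: "a < c" "0 \<le> a" "e \<in> E \<Longrightarrow> c \<le> L e"
    "\<And>s. a \<le> s \<Longrightarrow> s \<le> c \<Longrightarrow> F (Ep e s) = poly p s" "pderiv (pderiv p) = 0"
    using segment_poly[OF om aff e ac] by blast
  have g: "g (Ep e s) = poly (GP e) s" if "a \<le> s" "s \<le> c" for s
    using e that p(2,3) potential_edge[OF pot] potential_hedge[OF pot] by force
  have germs: "piece F e a c = p" "dplus F e a = poly (pderiv p) a" "dminus F e c = poly (pderiv p) c"
    using segment_germs[of a c F e p] p(1,4) by auto
  have "polyint (piece F e a c * - pderiv (pderiv (GP e))) a c
      = (poly (pderiv p) c * poly (GP e) c - poly p c * poly (pderiv (GP e)) c)
        - (poly (pderiv p) a * poly (GP e) a - poly p a * poly (pderiv (GP e)) a)"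
    using polyint_green_affine[OF p(5), of "GP e" a c] germs(1) by simp
  also have "\<dots> = wronskian_left F GP g e c - wronskian_right F GP g e a"
    unfolding wronskian_left_def wronskian_right_def germs(2,3) using p(1,4) g[of a] g[of c] by simp
  finally show ?thesis .
qed

lemma edge_green:
  assumes pot: "is_potential \<mu> g GP" and om: "omega_logP G P F" and aff: "affine_off_cuts P F"
    and P: "finite P" and e: "e \<in> E"
  shows "(\<Sum>(a, c)\<in>consec (ecuts G P e). polyint (piece F e a c * dens \<mu> e) a c)
    = (\<Sum>c\<in>cuts G P e. (dminus F e c - dplus F e c) * g (Ep e c))
      + wronskian_left F GP g e (L e) - wronskian_right F GP g e 0"
proof -
  note ef = ecuts_props[OF P e]
  have "(\<Sum>(a, c)\<in>consec (ecuts G P e). polyint (piece F e a c * dens \<mu> e) a c)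
      = (\<Sum>(a, c)\<in>consec (ecuts G P e). wronskian_left F GP g e c - wronskian_right F GP g e a)"
    using segment_green[OF pot om aff, of e] potential_dens[OF pot e] e by (intro sum.cong refl) auto
  also have "\<dots> = (\<Sum>c\<in>insert (L e) (cuts G P e). wronskian_left F GP g e c - wronskian_right F GP g e c)
      + wronskian_right F GP g e (L e) - wronskian_right F GP g e 0"
    using sum_consec_by_parts[OF ef(1,2)] ef(3,4,5) by simp
  also have "\<dots> = (\<Sum>c\<in>cuts G P e. (dminus F e c - dplus F e c) * g (Ep e c))
      + wronskian_left F GP g e (L e) - wronskian_right F GP g e 0"
    using finite_cuts[OF P] e ef(6)
    by (simp add: wronskian_left_def wronskian_right_def algebra_simps)
  finally show ?thesis .
qed

lemma hedge_green:
  assumes pot: "is_potential \<mu> g GP" and om: "omega_logP G P F" and aff: "affine_off_cuts P F"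
    and P: "finite P" and d: "d \<in> D"
  shows "(\<Sum>c\<in>cuts G P d. (dminus F d c - dplus F d c) * g (Ep d c))
      + wronskian_right F GP g d (tailst G P d) - wronskian_right F GP g d 0 = 0"
proof -
  note hf = hedge_cuts_props[OF P d]
  have "0 = (\<Sum>(a, c)\<in>consec ({0} \<union> cuts G P d). wronskian_left F GP g d c - wronskian_right F GP g d a)"
    using segment_green[OF pot om aff, of d] potential_hedge_affine[OF pot d] d hedge_not_edge
    by (intro sum.neutral[symmetric]) (auto simp: polyint_def)
  also have "\<dots> = (\<Sum>c\<in>cuts G P d. wronskian_left F GP g d c - wronskian_right F GP g d c)
      + wronskian_right F GP g d (tailst G P d) - wronskian_right F GP g d 0"
    using sum_consec_by_parts[OF hf(1)] hf(2,3,4) by simp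
  also have "\<dots> = (\<Sum>c\<in>cuts G P d. (dminus F d c - dplus F d c) * g (Ep d c))
      + wronskian_right F GP g d (tailst G P d) - wronskian_right F GP g d 0"
    by (simp add: wronskian_left_def wronskian_right_def algebra_simps)
  finally show ?thesis by simp
qed

lemma wronskian_left_end:
  assumes pot: "is_potential \<mu> g GP" and om: "omega_logP G P F" and aff: "affine_off_cuts P F"
    and P: "finite P" and e: "e \<in> E"
  shows "wronskian_left F GP g e (L e) = - wronskian_right F GP g (iv e) 0"
proof -
  note ef = ecuts_props[OF P e]
  have "Min (ecuts G P e) < L e" using ef(3) len_pos[OF e] by simp
  from consec_predecessor[OF ef(1) _ this] obtain a where "(a, L e) \<in> consec (break_points P e)"
    using e unfolding ecuts_def by auto
  then obtain p where p: "a < L e" "0 \<le> a" "\<And>s. a \<le> s \<Longrightarrow> s \<le> L e \<Longrightarrow> F (Ep e s) = poly p s"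
    using segment_poly[OF om aff, of e] e by blast
  have F_inv: "F (Ep e t) = F (Ep (iv e) (L e - t))" if "0 \<le> t" "t \<le> L e" for t
    using om e that unfolding omega_logP_def resp_def by blast
  have "F (Ep (iv e) s) = poly (pcompose p [:L e, -1:]) s" if "0 \<le> s" "s \<le> L e - a" for s
    using F_inv[of "L e - s"] p(3)[of "L e - s"] that p(1,2) by simp
  then have "dplus F (iv e) 0 = - poly (pderiv p) (L e)"
    using dplus_eq[of "L e - a" 0 F "iv e" "pcompose p [:L e, -1:]"] p(1)
    by (simp add: pderiv_pcompose_reflect)
  moreover have "dminus F e (L e) = poly (pderiv p) (L e)" using segment_germs[OF p(1,3)] by simp
  moreover have "F (Ep e (L e)) = F (Ep (iv e) 0)" using F_inv[of "L e"] len_pos[OF e] by simp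
  moreover have "g (Ep e (L e)) = g (Ep (iv e) 0)"
    using potential_Ep_inv[OF pot e, of "L e"] len_pos[OF e] by simp
  moreover have "poly (pderiv (GP e)) (L e) = - poly (pderiv (GP (iv e))) 0"
    by (simp add: potential_inv[OF pot e] pderiv_pcompose_reflect)
  ultimately show ?thesis unfolding wronskian_left_def wronskian_right_def by simp
qed

context
  fixes \<mu> g GP x b F
  assumes pot: "is_potential \<mu> g GP" and x: "valid_pt G x" and b: "valid_pt G b"
    and om: "omega_logP G {x, b} F" and dipole: "lap_is_dipole G x b F"
begin

lemma affine_off_cuts_dipole: "affine_off_cuts {x, b} F"
  using dipole unfolding affine_off_cuts_def lap_is_dipole_def by auto

lemma jump_sum_dipole:
  assumes "e \<in> E \<union> D"
  shows "(\<Sum>c\<in>cuts G {x, b} e. (dminus F e c - dplus F e c) * g (Ep e c))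
    = (\<Sum>c\<in>cuts G {x, b} e. (dlt G x (Ep e c) - dlt G b (Ep e c)) * g (Ep e c))"
  using dipole assms unfolding lap_is_dipole_def by (intro sum.cong refl) force

lemma edge_part_dipole:
  "(\<Sum>e\<in>E. \<Sum>(a, c)\<in>consec (ecuts G {x, b} e). polyint (piece F e a c * dens \<mu> e) a c)
    = (\<Sum>e\<in>E. \<Sum>c\<in>cuts G {x, b} e. (dlt G x (Ep e c) - dlt G b (Ep e c)) * g (Ep e c))
      - 2 * (\<Sum>e\<in>E. wronskian_right F GP g e 0)"
proof -
  note green = edge_green[OF pot om affine_off_cuts_dipole]
    wronskian_left_end[OF pot om affine_off_cuts_dipole]
  have "(\<Sum>e\<in>E. \<Sum>(a, c)\<in>consec (ecuts G {x, b} e). polyint (piece F e a c * dens \<mu> e) a c)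
      = (\<Sum>e\<in>E. (\<Sum>c\<in>cuts G {x, b} e. (dlt G x (Ep e c) - dlt G b (Ep e c)) * g (Ep e c))
          - wronskian_right F GP g (iv e) 0 - wronskian_right F GP g e 0)"
    using green jump_sum_dipole by (intro sum.cong refl) auto
  also have "\<dots> = (\<Sum>e\<in>E. \<Sum>c\<in>cuts G {x, b} e. (dlt G x (Ep e c) - dlt G b (Ep e c)) * g (Ep e c))
      - (\<Sum>e\<in>E. wronskian_right F GP g (iv e) 0) - (\<Sum>e\<in>E. wronskian_right F GP g e 0)"
    by (simp add: sum_subtractf)
  finally show ?thesis using sum_edges_inv[of "\<lambda>e. wronskian_right F GP g e 0"] by simp
qed

lemma hedge_part_dipole:
  assumes d: "d \<in> D"
  shows "hm \<mu> d * F (Ep d (tailst G {x, b} d))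
    = (\<Sum>c\<in>cuts G {x, b} d. (dlt G x (Ep d c) - dlt G b (Ep d c)) * g (Ep d c))
      - wronskian_right F GP g d 0"
proof -
  have "poly (pderiv (GP d)) (tailst G {x, b} d) = hm \<mu> d"
    using pderiv_eq_0_imp_poly_const[OF potential_hedge_affine[OF pot d]]
      potential_hedge_slope[OF pot d] by metis
  moreover have "dplus F d (tailst G {x, b} d) = 0"
    using dipole d unfolding lap_is_dipole_def by blast
  ultimately show ?thesis
    using hedge_green[OF pot om affine_off_cuts_dipole _ d] jump_sum_dipole[of d] d
    by (simp add: wronskian_right_def algebra_simps)
qed

lemma vertex_part_dipole:
  "(\<Sum>e\<in>E. wronskian_right F GP g e 0) + (\<Sum>d\<in>D. wronskian_right F GP g d 0)
    = (\<Sum>v\<in>V. vm \<mu> v * F (Vx v)) - (\<Sum>v\<in>V. (dlt G x (Vx v) - dlt G b (Vx v)) * g (Vx v))"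
proof -
  have at_v: "(\<Sum>e\<in>{e \<in> E \<union> D. src G e = v}. wronskian_right F GP g e 0)
      = vm \<mu> v * F (Vx v) - (dlt G x (Vx v) - dlt G b (Vx v)) * g (Vx v)" if v: "v \<in> V" for v
  proof -
    have "(\<Sum>e\<in>{e \<in> E \<union> D. src G e = v}. wronskian_right F GP g e 0)
        = (\<Sum>e\<in>{e \<in> E \<union> D. src G e = v}. dplus F e 0) * g (Vx v)
          - F (Vx v) * (\<Sum>e\<in>{e \<in> E \<union> D. src G e = v}. poly (pderiv (GP e)) 0)"
      using om potential_Ep_0[OF pot] unfolding wronskian_right_def omega_logP_def resp_def
      by (simp add: sum_subtractf sum_distrib_left sum_distrib_right)
    also have "\<dots> = vm \<mu> v * F (Vx v) - (dlt G x (Vx v) - dlt G b (Vx v)) * g (Vx v)"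
      using dipole v potential_vertex_mass[OF pot v] unfolding lap_is_dipole_def
      by (simp add: algebra_simps)
    finally show ?thesis .
  qed
  have "(\<Sum>e\<in>E. wronskian_right F GP g e 0) + (\<Sum>d\<in>D. wronskian_right F GP g d 0)
      = (\<Sum>e\<in>E \<union> D. wronskian_right F GP g e 0)"
    using finite_edges finite_hedges edges_hedges_disjoint by (simp add: sum.union_disjoint)
  also have "\<dots> = (\<Sum>v\<in>V. \<Sum>e\<in>{e \<in> E \<union> D. src G e = v}. wronskian_right F GP g e 0)"
    by (rule sum_verts_out_edges[symmetric]) simp
  also have "\<dots> = (\<Sum>v\<in>V. vm \<mu> v * F (Vx v) - (dlt G x (Vx v) - dlt G b (Vx v)) * g (Vx v))"
    using at_v by simp
  finally show ?thesis by (simp add: sum_subtractf)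
qed

text \<open>Green's identity: integrating the Green function of x - b against
  mu = Delta g gives the integral of g against x - b.\<close>
lemma integP_dipole: "integP G {x, b} F \<mu> = g x - g b"
proof -
  let ?J = "\<lambda>e. \<Sum>c\<in>cuts G {x, b} e. (dlt G x (Ep e c) - dlt G b (Ep e c)) * g (Ep e c)"
  let ?W = "\<lambda>e. wronskian_right F GP g e 0"
  have "integP G {x, b} F \<mu> = ((\<Sum>e\<in>E. ?J e) - 2 * (\<Sum>e\<in>E. ?W e)) / 2
      + (\<Sum>v\<in>V. vm \<mu> v * F (Vx v)) + ((\<Sum>d\<in>D. ?J d) - (\<Sum>d\<in>D. ?W d))"
    unfolding integP_def edge_part_dipole using hedge_part_dipole by (simp add: sum_subtractf)
  also have "\<dots> = (\<Sum>e\<in>E. ?J e) / 2 + (\<Sum>d\<in>D. ?J d)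
      + (\<Sum>v\<in>V. (dlt G x (Vx v) - dlt G b (Vx v)) * g (Vx v))"
    using vertex_part_dipole by (simp add: diff_divide_distrib)
  also have "\<dots> = delta_integral {x, b} x g - delta_integral {x, b} b g"
    unfolding delta_integral_def by (simp add: left_diff_distrib sum_subtractf diff_divide_distrib)
  also have "\<dots> = g x - g b" using delta_integral_potential[OF pot] x b by simp
  finally show ?thesis .
qed

end

section \<open>The Green function of a dipole\<close>

text \<open>The unit mass at p, moved to the end points of the edge containing p
  (to the source of a half-edge).\<close>
definition projected_mass :: "('v, 'e) pt \<Rightarrow> 'v \<Rightarrow> rat" where
  "projected_mass p v = dlt G p (Vx v) + (\<Sum>e\<in>{e \<in> E \<union> D. src G e = v}. src_share p e)"

definition dipole_vertex_meas :: "('v, 'e) pt \<Rightarrow> ('v, 'e) pt \<Rightarrow> ('v, 'e) meas" where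
  "dipole_vertex_meas x b = \<lparr>dens = (\<lambda>_. 0),
     vm = (\<lambda>v. if v \<in> V then projected_mass x v - projected_mass b v else 0), hm = (\<lambda>_. 0)\<rparr>"

text \<open>A potential g of the projected dipole, corrected on the edges through x and b:
  the linear term undoes the projection, the ramps create the kinks at x and b.\<close>
definition dipole_fn :: "(('v, 'e) pt \<Rightarrow> rat) \<Rightarrow> ('v, 'e) pt \<Rightarrow> ('v, 'e) pt \<Rightarrow> ('v, 'e) pt \<Rightarrow> rat" where
  "dipole_fn g x b z = (case z of Vx v \<Rightarrow> g (Vx v) | Ep e s \<Rightarrow>
     g (Ep e s) + (src_share x e - src_share b e) * s
       - kink x e * max 0 (s - position x e) + kink b e * max 0 (s - position b e))"

definition dipole_poly :: "('e \<Rightarrow> rat poly) \<Rightarrow> ('v, 'e) pt \<Rightarrow> ('v, 'e) pt \<Rightarrow> 'e \<Rightarrow> rat poly" where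
  "dipole_poly GP x b e = GP e + [:0, src_share x e - src_share b e:]"

lemma sum_projected_mass:
  assumes "valid_pt G p"
  shows "(\<Sum>v\<in>V. projected_mass p v) = 1"
proof -
  have "(\<Sum>v\<in>V. \<Sum>e\<in>{e \<in> E \<union> D. src G e = v}. src_share p e) = (\<Sum>e\<in>E \<union> D. src_share p e)"
    by (rule sum_verts_out_edges) simp
  then show ?thesis using point_total_mass[OF assms] by (simp add: projected_mass_def sum.distrib)
qed

lemma dipole_vertex_meas_M0:
  assumes "valid_pt G x" "valid_pt G b"
  shows "is_meas G (dipole_vertex_meas x b)" "total_mass G (dipole_vertex_meas x b) = 0"
  using sum_projected_mass[OF assms(1)] sum_projected_mass[OF assms(2)]
  by (simp_all add: is_meas_def dipole_vertex_meas_def total_mass_def polyint_def sum_subtractf)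

context
  fixes x b :: "('v, 'e) pt" and g GP
  assumes x: "valid_pt G x" and b: "valid_pt G b"
    and pot: "is_potential (dipole_vertex_meas x b) g GP"
begin

lemma dipole_fn_Ep:
  assumes "e \<in> E \<union> D" "0 \<le> s" "e \<in> E \<longrightarrow> s \<le> L e"
  shows "dipole_fn g x b (Ep e s)
    = ramps (dipole_poly GP x b e) (- kink x e) (position x e) (kink b e) (position b e) s"
  using assms potential_edge[OF pot] potential_hedge[OF pot]
  unfolding dipole_fn_def ramps_def dipole_poly_def by (auto simp: algebra_simps)

lemma pderiv2_dipole_poly: "e \<in> E \<union> D \<Longrightarrow> pderiv (pderiv (dipole_poly GP x b e)) = 0"
  using potential_dens[OF pot] potential_hedge_affine[OF pot]
  by (auto simp: dipole_poly_def dipole_vertex_meas_def pderiv_add pderiv_pCons)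

lemma kinks_at_cuts:
  "kink x e \<noteq> 0 \<Longrightarrow> position x e \<in> cuts G {x, b} e \<and> 0 < position x e"
  "kink b e \<noteq> 0 \<Longrightarrow> position b e \<in> cuts G {x, b} e \<and> 0 < position b e"
  using position_in_cuts[OF x] position_in_cuts[OF b] position_pos[OF x] position_pos[OF b]
  unfolding kink_def by (auto split: if_splits)

lemma dplus_dipole_fn:
  assumes e: "e \<in> E \<union> D" and t: "0 \<le> t" "e \<in> E \<longrightarrow> t < L e"
  shows "dplus (dipole_fn g x b) e t = poly (pderiv (dipole_poly GP x b e)) t
    - (if position x e \<le> t then kink x e else 0) + (if position b e \<le> t then kink b e else 0)"
proof -
  have "0 < (if e \<in> E then L e - t else 1)" using t by auto
  then obtain \<epsilon> where \<epsilon>: "0 < \<epsilon>" "\<epsilon> \<le> (if e \<in> E then L e - t else 1)"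
    "\<And>s. t \<le> s \<Longrightarrow> s \<le> t + \<epsilon> \<Longrightarrow>
       ramps (dipole_poly GP x b e) (- kink x e) (position x e) (kink b e) (position b e) s
       = poly (ramps_poly_right (dipole_poly GP x b e) (- kink x e) (position x e) (kink b e) (position b e) t) s"
    by (rule ramps_germ_right) blast
  have "dplus (dipole_fn g x b) e t
     = poly (pderiv (ramps_poly_right (dipole_poly GP x b e) (- kink x e) (position x e) (kink b e) (position b e) t)) t"
    by (rule dplus_eq[OF \<epsilon>(1)]) (use \<epsilon> t dipole_fn_Ep[OF e] in \<open>auto split: if_splits\<close>)
  then show ?thesis by (simp add: poly_pderiv_ramps_poly_right)
qed

lemma dminus_dipole_fn:
  assumes e: "e \<in> E \<union> D" and t: "0 < t" "e \<in> E \<longrightarrow> t \<le> L e"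
  shows "dminus (dipole_fn g x b) e t = poly (pderiv (dipole_poly GP x b e)) t
    - (if position x e < t then kink x e else 0) + (if position b e < t then kink b e else 0)"
proof -
  obtain \<epsilon> where \<epsilon>: "0 < \<epsilon>" "\<epsilon> \<le> t"
    "\<And>s. t - \<epsilon> \<le> s \<Longrightarrow> s \<le> t \<Longrightarrow>
       ramps (dipole_poly GP x b e) (- kink x e) (position x e) (kink b e) (position b e) s
       = poly (ramps_poly_left (dipole_poly GP x b e) (- kink x e) (position x e) (kink b e) (position b e) t) s"
    by (rule ramps_germ_left[OF t(1)]) blast
  have "dminus (dipole_fn g x b) e t
     = poly (pderiv (ramps_poly_left (dipole_poly GP x b e) (- kink x e) (position x e) (kink b e) (position b e) t)) t"
    by (rule dminus_eq[OF \<epsilon>(1)]) (use \<epsilon> t dipole_fn_Ep[OF e] in auto)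
  then show ?thesis by (simp add: poly_pderiv_ramps_poly_left)
qed

lemma resp_dipole_fn: "resp G (dipole_fn g x b)"
  unfolding resp_def
proof (intro conjI ballI allI impI)
  fix e assume e: "e \<in> E \<union> D"
  have "kink x e * max 0 (- position x e) = 0"
    by (cases "kink x e = 0") (use kinks_at_cuts(1)[of e] in \<open>auto simp: max_def\<close>)
  moreover have "kink b e * max 0 (- position b e) = 0"
    by (cases "kink b e = 0") (use kinks_at_cuts(2)[of e] in \<open>auto simp: max_def\<close>)
  ultimately show "dipole_fn g x b (Ep e 0) = dipole_fn g x b (Vx (src G e))"
    using potential_Ep_0[OF pot e] unfolding dipole_fn_def by (simp del: mult_eq_0_iff)
next
  fix e t assume e: "e \<in> E" and t: "0 \<le> t \<and> t \<le> L e"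
  have "src_share x e * t - kink x e * max 0 (t - position x e)
      = src_share x (iv e) * (L e - t) - kink x (iv e) * max 0 (L e - t - position x (iv e))"
    "src_share b e * t - kink b e * max 0 (t - position b e)
      = src_share b (iv e) * (L e - t) - kink b (iv e) * max 0 (L e - t - position b (iv e))"
    using src_share_ramp_inv[OF x e, of t] src_share_ramp_inv[OF b e, of t] t by simp_all
  then show "dipole_fn g x b (Ep e t) = dipole_fn g x b (Ep (iv e) (L e - t))"
    using potential_Ep_inv[OF pot e, of t] t by (simp add: dipole_fn_def algebra_simps)
qed

lemma dipole_fn_segment:
  assumes e: "e \<in> E \<union> D" and ac: "(a, c) \<in> consec C" and "cuts G {x, b} e \<subseteq> C"
    and bounds: "\<And>y. y \<in> C \<Longrightarrow> 0 \<le> y \<and> (e \<in> E \<longrightarrow> y \<le> L e)"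
  shows "\<exists>p. \<forall>s. a \<le> s \<and> s \<le> c \<longrightarrow> dipole_fn g x b (Ep e s) = poly p s"
proof (intro exI allI impI)
  fix s assume s: "a \<le> s \<and> s \<le> c"
  have "a \<in> C" "c \<in> C" using ac unfolding consec_def by auto
  then have "0 \<le> s" "e \<in> E \<longrightarrow> s \<le> L e" using bounds s by force+
  then have "dipole_fn g x b (Ep e s)
      = ramps (dipole_poly GP x b e) (- kink x e) (position x e) (kink b e) (position b e) s"
    by (rule dipole_fn_Ep[OF e])
  also have "\<dots> = poly (ramps_poly_right (dipole_poly GP x b e)
      (- kink x e) (position x e) (kink b e) (position b e) a) s"
  proof (rule ramps_eq_poly_right)
    show "- kink x e \<noteq> 0 \<longrightarrow> c \<le> position x e \<or> position x e \<le> a"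
      using kinks_at_cuts(1)[of e] assms(3) consec_not_between[OF ac] by auto
    show "kink b e \<noteq> 0 \<longrightarrow> c \<le> position b e \<or> position b e \<le> a"
      using kinks_at_cuts(2)[of e] assms(3) consec_not_between[OF ac] by auto
  qed (use s in auto)
  finally show "dipole_fn g x b (Ep e s) = poly (ramps_poly_right (dipole_poly GP x b e)
      (- kink x e) (position x e) (kink b e) (position b e) a) s" .
qed

lemma dipole_fn_tail:
  assumes d: "d \<in> D"
  shows "\<exists>\<alpha> \<beta>. \<forall>s. tailst G {x, b} d \<le> s \<longrightarrow> dipole_fn g x b (Ep d s) = \<alpha> + \<beta> * s"
proof -
  define T where "T = tailst G {x, b} d"
  define R where "R = ramps_poly_right (dipole_poly GP x b d)
    (- kink x d) (position x d) (kink b d) (position b d) T"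
  have "0 \<le> T" unfolding T_def using hedge_cuts_props[of "{x, b}" d] d by simp
  have "dipole_fn g x b (Ep d s) = poly R s" if "T \<le> s" for s
  proof -
    have "dipole_fn g x b (Ep d s)
        = ramps (dipole_poly GP x b d) (- kink x d) (position x d) (kink b d) (position b d) s"
      using dipole_fn_Ep[of d s] d that \<open>0 \<le> T\<close> hedge_not_edge by simp
    also have "\<dots> = poly R s" unfolding R_def
    proof (rule ramps_eq_poly_right[OF that order_refl])
      show "- kink x d \<noteq> 0 \<longrightarrow> s \<le> position x d \<or> position x d \<le> T"
        using kinks_at_cuts(1)[of d] cut_le_tailst[of "{x, b}" d] d unfolding T_def by auto
      show "kink b d \<noteq> 0 \<longrightarrow> s \<le> position b d \<or> position b d \<le> T"
        using kinks_at_cuts(2)[of d] cut_le_tailst[of "{x, b}" d] d unfolding T_def by auto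
    qed
    finally show ?thesis .
  qed
  moreover have "pderiv (pderiv R) = 0"
    unfolding R_def pderiv2_ramps_poly_right using pderiv2_dipole_poly d by simp
  ultimately show ?thesis using pderiv2_eq_0_imp_poly_affine unfolding T_def by metis
qed

lemma omega_logP_dipole_fn: "omega_logP G {x, b} (dipole_fn g x b)"
  unfolding omega_logP_def
proof (intro conjI ballI)
  show "resp G (dipole_fn g x b)" by (rule resp_dipole_fn)
next
  fix e ac assume e: "e \<in> E" and ac: "ac \<in> consec (ecuts G {x, b} e)"
  have "0 \<le> y \<and> (e \<in> E \<longrightarrow> y \<le> L e)" if "y \<in> ecuts G {x, b} e" for y
    using ecuts_bounds[OF e that] by simp
  then show "case ac of (a, c) \<Rightarrow> \<exists>p. \<forall>s. a \<le> s \<and> s \<le> c \<longrightarrow> dipole_fn g x b (Ep e s) = poly p s"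
    using dipole_fn_segment[of e _ _ "ecuts G {x, b} e"] e ac by (cases ac) (auto simp: ecuts_def)
next
  fix d ac assume d: "d \<in> D" and ac: "ac \<in> consec ({0} \<union> cuts G {x, b} d)"
  have "0 \<le> y \<and> (d \<in> E \<longrightarrow> y \<le> L d)" if "y \<in> {0} \<union> cuts G {x, b} d" for y
    using that cuts_pos[of y "{x, b}" d] hedge_not_edge[OF d] by auto
  then show "case ac of (a, c) \<Rightarrow> \<exists>p. \<forall>s. a \<le> s \<and> s \<le> c \<longrightarrow> dipole_fn g x b (Ep d s) = poly p s"
    using dipole_fn_segment[of d _ _ "{0} \<union> cuts G {x, b} d"] d ac by (cases ac) auto
qed (rule dipole_fn_tail)

lemma dd_dipole_fn:
  assumes e: "e \<in> E \<union> D" and t: "0 < t" "e \<in> E \<longrightarrow> t < L e" "t \<notin> cuts G {x, b} e"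
  shows "dd (dipole_fn g x b) e t = 0"
proof -
  have "0 < (if e \<in> E then min t (L e - t) else t)" using t by auto
  moreover have "- kink x e \<noteq> 0 \<longrightarrow> position x e \<noteq> t" "kink b e \<noteq> 0 \<longrightarrow> position b e \<noteq> t"
    using kinks_at_cuts[of e] t by auto
  ultimately obtain \<epsilon> where \<epsilon>: "0 < \<epsilon>" "\<epsilon> \<le> (if e \<in> E then min t (L e - t) else t)"
    "\<And>s. t - \<epsilon> \<le> s \<Longrightarrow> s \<le> t + \<epsilon> \<Longrightarrow>
       ramps (dipole_poly GP x b e) (- kink x e) (position x e) (kink b e) (position b e) s
       = poly (ramps_poly_right (dipole_poly GP x b e)
           (- kink x e) (position x e) (kink b e) (position b e) (t - \<epsilon>)) s"
    by (rule ramps_germ_off_kinks) blast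
  have "dd (dipole_fn g x b) e t = poly (pderiv (pderiv (ramps_poly_right (dipole_poly GP x b e)
      (- kink x e) (position x e) (kink b e) (position b e) (t - \<epsilon>)))) t"
    by (rule dd_eq[OF \<epsilon>(1)]) (use \<epsilon> dipole_fn_Ep[OF e] in \<open>auto split: if_splits\<close>)
  then show ?thesis by (simp add: pderiv2_ramps_poly_right pderiv2_dipole_poly[OF e])
qed

lemma outflow_dipole_fn:
  assumes v: "v \<in> V"
  shows "- (\<Sum>e\<in>{e \<in> E \<union> D. src G e = v}. dplus (dipole_fn g x b) e 0)
    = dlt G x (Vx v) - dlt G b (Vx v)"
proof -
  have "dplus (dipole_fn g x b) e 0 = poly (pderiv (GP e)) 0 + (src_share x e - src_share b e)"
    if e: "e \<in> E \<union> D" for e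
  proof -
    have "(if position x e \<le> 0 then kink x e else 0) = 0" "(if position b e \<le> 0 then kink b e else 0) = 0"
      using kinks_at_cuts[of e] by (metis not_le)+
    then show ?thesis using dplus_dipole_fn[OF e, of 0] len_pos
      by (simp add: dipole_poly_def pderiv_add pderiv_pCons)
  qed
  then have "(\<Sum>e\<in>{e \<in> E \<union> D. src G e = v}. dplus (dipole_fn g x b) e 0)
      = (\<Sum>e\<in>{e \<in> E \<union> D. src G e = v}. poly (pderiv (GP e)) 0)
        + (\<Sum>e\<in>{e \<in> E \<union> D. src G e = v}. src_share x e)
        - (\<Sum>e\<in>{e \<in> E \<union> D. src G e = v}. src_share b e)"
    by (simp add: sum.distrib sum_subtractf)
  also have "\<dots> = - (dlt G x (Vx v) - dlt G b (Vx v))"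
    using potential_vertex_mass[OF pot v] v
    by (simp add: dipole_vertex_meas_def projected_mass_def)
  finally show ?thesis by simp
qed

lemma jump_dipole_fn:
  assumes e: "e \<in> E \<union> D" and t: "t \<in> cuts G {x, b} e"
  shows "- (dplus (dipole_fn g x b) e t - dminus (dipole_fn g x b) e t)
    = dlt G x (Ep e t) - dlt G b (Ep e t)"
proof -
  have t': "0 < t" "e \<in> E \<longrightarrow> t < L e" using cuts_pos[OF t] cuts_edge_bounds[of e t] t by auto
  have "dplus (dipole_fn g x b) e t - dminus (dipole_fn g x b) e t
      = - (if position x e = t then kink x e else 0) + (if position b e = t then kink b e else 0)"
    using dplus_dipole_fn[OF e _ t'(2)] dminus_dipole_fn[OF e t'(1)] t' by auto
  then show ?thesis
    unfolding dlt_Ep_interior[OF x e t'] dlt_Ep_interior[OF b e t'] kink_def by auto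
qed

lemma dplus_dipole_fn_tail:
  assumes d: "d \<in> D"
  shows "dplus (dipole_fn g x b) d (tailst G {x, b} d) = 0"
proof -
  define T where "T = tailst G {x, b} d"
  have "0 \<le> T" unfolding T_def using hedge_cuts_props[of "{x, b}" d] d by simp
  have "(if position x d \<le> T then kink x d else 0) = kink x d"
    using kinks_at_cuts(1)[of d] cut_le_tailst[of "{x, b}" d] d unfolding T_def
    by (cases "kink x d = 0") auto
  moreover have "(if position b d \<le> T then kink b d else 0) = kink b d"
    using kinks_at_cuts(2)[of d] cut_le_tailst[of "{x, b}" d] d unfolding T_def
    by (cases "kink b d = 0") auto
  moreover have "poly (pderiv (GP d)) T = 0"
    using pderiv_eq_0_imp_poly_const[OF potential_hedge_affine[OF pot d], of T 0]
      potential_hedge_slope[OF pot d] by (simp add: dipole_vertex_meas_def)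
  ultimately have "dplus (dipole_fn g x b) d T = src_share x d - src_share b d - kink x d + kink b d"
    using dplus_dipole_fn[of d T] d \<open>0 \<le> T\<close> hedge_not_edge
    by (simp add: dipole_poly_def pderiv_add pderiv_pCons)
  also have "\<dots> = 0" using src_share_hedge[OF x d] src_share_hedge[OF b d] by simp
  finally show ?thesis unfolding T_def .
qed

lemma lap_is_dipole_dipole_fn: "lap_is_dipole G x b (dipole_fn g x b)"
  unfolding lap_is_dipole_def
  using dd_dipole_fn outflow_dipole_fn jump_dipole_fn dplus_dipole_fn_tail by simp

end

lemma green_function_exists:
  assumes "valid_pt G x" "valid_pt G b"
  shows "\<exists>F. omega_logP G {x, b} F \<and> lap_is_dipole G x b F"
proof -
  obtain g GP where "is_potential (dipole_vertex_meas x b) g GP"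
    using potential_exists dipole_vertex_meas_M0[OF assms] by metis
  then show ?thesis using omega_logP_dipole_fn lap_is_dipole_dipole_fn assms by blast
qed

lemma pair_pt_potential:
  assumes pot: "is_potential \<mu> g GP" and "valid_pt G x" "valid_pt G b"
  shows "pair_pt G x b \<mu> = g x - g b"
proof -
  let ?F = "SOME F. omega_logP G {x, b} F \<and> lap_is_dipole G x b F"
  have "omega_logP G {x, b} ?F \<and> lap_is_dipole G x b ?F"
    using someI_ex[OF green_function_exists[OF assms(2,3)]] .
  then show ?thesis unfolding pair_pt_def using integP_dipole[OF pot assms(2,3)] by blast
qed

text \<open>omega_log and lap only inspect valid points, so the values of f elsewhere are
  irrelevant.\<close>
context
  fixes \<mu> g GP f c
  assumes pot: "is_potential \<mu> g GP" and f: "\<And>z. valid_pt G z \<Longrightarrow> f z = g z - c"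
begin

lemma potential_shift_Ep:
  "e \<in> E \<Longrightarrow> 0 \<le> s \<Longrightarrow> s \<le> L e \<Longrightarrow> f (Ep e s) = poly (GP e - [:c:]) s"
  "d \<in> D \<Longrightarrow> 0 \<le> s \<Longrightarrow> f (Ep d s) = poly (GP d - [:c:]) s"
  using f potential_edge[OF pot] potential_hedge[OF pot] by auto

lemma omega_log_potential_shift: "omega_log G f"
  unfolding omega_log_def omega_logP_def
proof (intro conjI ballI)
  show "resp G f"
    unfolding resp_def
  proof (intro conjI ballI allI impI)
    fix e assume "e \<in> E \<union> D"
    then show "f (Ep e 0) = f (Vx (src G e))"
      using f potential_Ep_0[OF pot] src_in_verts len_pos by (auto simp: less_imp_le)
  next
    fix e t assume "e \<in> E" "0 \<le> t \<and> t \<le> L e"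
    then show "f (Ep e t) = f (Ep (iv e) (L e - t))"
      using f potential_Ep_inv[OF pot] inv_in_edges len_inv by auto
  qed
next
  fix e ac assume e: "e \<in> E" and ac: "ac \<in> consec (ecuts G {} e)"
  obtain a c' where ac': "ac = (a, c')" "a \<in> ecuts G {} e" "c' \<in> ecuts G {} e"
    using ac unfolding consec_def by auto
  have "\<forall>s. a \<le> s \<and> s \<le> c' \<longrightarrow> f (Ep e s) = poly (GP e - [:c:]) s"
    using potential_shift_Ep(1)[OF e] ecuts_bounds[OF e ac'(2)] ecuts_bounds[OF e ac'(3)] by auto
  then show "case ac of (a, c') \<Rightarrow> \<exists>p. \<forall>s. a \<le> s \<and> s \<le> c' \<longrightarrow> f (Ep e s) = poly p s"
    unfolding ac'(1) by blast
next
  fix d ac assume d: "d \<in> D" and ac: "ac \<in> consec ({0} \<union> cuts G {} d)"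
  obtain a c' where ac': "ac = (a, c')" "a \<in> {0} \<union> cuts G {} d"
    using ac unfolding consec_def by auto
  then have "\<forall>s. a \<le> s \<and> s \<le> c' \<longrightarrow> f (Ep d s) = poly (GP d - [:c:]) s"
    using potential_shift_Ep(2)[OF d] cuts_pos[of a "{}" d] by auto
  then show "case ac of (a, c') \<Rightarrow> \<exists>p. \<forall>s. a \<le> s \<and> s \<le> c' \<longrightarrow> f (Ep d s) = poly p s"
    unfolding ac'(1) by blast
next
  fix d assume d: "d \<in> D"
  have "f (Ep d s) = (poly (GP d) 0 - c) + poly (pderiv (GP d)) 0 * s" if "tailst G {} d \<le> s" for s
    using that hedge_cuts_props[of "{}" d] d potential_shift_Ep(2)[OF d, of s]
      pderiv2_eq_0_imp_poly_affine[OF potential_hedge_affine[OF pot d], of s] by simp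
  then show "\<exists>\<alpha> \<beta>. \<forall>s. tailst G {} d \<le> s \<longrightarrow> f (Ep d s) = \<alpha> + \<beta> * s" by blast
qed

lemma lap_potential_shift:
  assumes "is_meas G \<mu>"
  shows "lap G f = \<mu>"
proof -
  have fpoly: "fpoly G f e = GP e - [:c:]" if "e \<in> E \<union> D" for e
    using that potential_shift_Ep fpoly_edge[of e G f] fpoly_hedge[of e G f] len_pos hedge_not_edge
    by (cases "e \<in> E") auto
  have slope: "poly (pderiv (fpoly G f e)) 0 = poly (pderiv (GP e)) 0" if "e \<in> E \<union> D" for e
    using fpoly[OF that] by (simp add: pderiv_diff)
  show ?thesis
  proof (rule meas.equality)
    show "dens (lap G f) = dens \<mu>"
      using fpoly potential_dens[OF pot] assms
      by (auto simp: lap_def is_meas_def pderiv_diff fun_eq_iff)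
    have "vm (lap G f) v = vm \<mu> v" for v
    proof (cases "v \<in> V")
      case True
      have "(\<Sum>e\<in>{e \<in> E \<union> D. src G e = v}. poly (pderiv (fpoly G f e)) 0)
          = (\<Sum>e\<in>{e \<in> E \<union> D. src G e = v}. poly (pderiv (GP e)) 0)"
        using slope by (intro sum.cong) auto
      then show ?thesis using True potential_vertex_mass[OF pot True] by (simp add: lap_def)
    qed (use assms in \<open>simp add: lap_def is_meas_def\<close>)
    then show "vm (lap G f) = vm \<mu>" ..
    show "hm (lap G f) = hm \<mu>"
      using slope potential_hedge_slope[OF pot] assms
      by (auto simp: lap_def is_meas_def fun_eq_iff)
  qed simp
qed

end

end

theorem lemma7p10:
  fixes G :: "('v, 'e) rmg" and \<mu> :: "('v, 'e) meas" and b :: "('v, 'e) pt"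
  assumes "rm_graph G"
    and "\<mu> \<in> M0 G"
    and "valid_pt G b"
  shows "omega_log G (\<lambda>x. pair_pt G x b \<mu>) \<and> lap G (\<lambda>x. pair_pt G x b \<mu>) = \<mu>"
proof -
  interpret metrised_graph G by (rule metrised_graph.intro[OF assms(1)])
  have meas: "is_meas G \<mu>" and total: "total_mass G \<mu> = 0" using assms(2) unfolding M0_def by auto
  obtain g GP where pot: "is_potential \<mu> g GP" using potential_exists[OF meas total] .
  have "pair_pt G z b \<mu> = g z - g b" if "valid_pt G z" for z
    using pair_pt_potential[OF pot that assms(3)] .
  then show ?thesis
    using omega_log_potential_shift[OF pot, of "\<lambda>x. pair_pt G x b \<mu>" "g b"]
      lap_potential_shift[OF pot, of "\<lambda>x. pair_pt G x b \<mu>" "g b", OF _ meas] by blast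
qed

end
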